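(* The strong security polar coding scheme (described in the context) achieves strong security over the non-degraded delay-CSI wiretap channel model: writing $\mathbf{I}^t=U_t^{\mathcal{I}'_t}$ and $\mathbf{Z}^t=Z^N_{\mathbf{s}_t}$, the total information leakage satisfies $$\mathrm{L}(T+1)=I\big(\mathbf{I}^{1:T};\mathbf{Z}^{1:T}\big)\le (T+1)\,O\big(N2^{-N^\beta}\big),$$ so that for every fixed $T$, $\lim_{N\to\infty}\mathrm{L}(T+1)=0$.
   Context: Notation: $N=2^n$, $\beta\in(0,1/2)$, $\delta_N=2^{-N^\beta}$, $\mathbf{G}_N=\mathbf{R}\mathbf{F}^{\otimes n}$ over $\mathrm{GF}(2)$ with $\mathbf{F}=\begin{bmatrix}1&0\\1&1\end{bmatrix}$ and $\mathbf{R}$ the bit-reversal permutation; $U_t^{\mathcal{A}}=(U_t^i)_{i\in\mathcal{A}}$ for block $t$. Model: main channel is a fixed, publicly known symmetric binary-input DMC $p_{Y|X}$; wiretap channel has a finite state set $\mathcal{S}$, each $s$ a symmetric binary-input DMC $p^{(s)}_{Z|X}$, not necessarily degraded with respect to the main channel. Blocks $t=0,\dots,T$ of length $N$; in block $t$ the eavesdropper picks $\mathbf{s}_t$, constant ($s$, block-varying) or a sequence $s^{1:N}$ (arbitrarily varying, $i$-th use has law $p^{(s^i)}_{Z|X}$), and observes $Z^N_{\mathbf{s}_t}$; Alice and Bob learn $\mathbf{s}_t$ only after block $t$. Bhattacharyya parameter $Z(X|Y)=2\sum_y p_Y(y)\sqrt{p_{X|Y}(0|y)p_{X|Y}(1|y)}$;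 with $U^N$ uniform, $X^N=U^N\mathbf{G}_N$: $\mathcal{L}_{X|Y}=\{i:Z(U^i|U^{1:i-1},Y^N)\le\delta_N\}$, $\mathcal{H}^{(\mathbf{s})}_{X|Z}=\{i:Z(U^i|U^{1:i-1},Z^N_{\mathbf{s}})\ge1-\delta_N\}$; $\mathcal{I}_t=\mathcal{L}_{X|Y}\cap\mathcal{H}^{(\mathbf{s}_t)}_{X|Z}$, $\mathcal{F}_t=(\mathcal{L}_{X|Y})^c\cap\mathcal{H}^{(\mathbf{s}_t)}_{X|Z}$, $\mathcal{R}_t=\mathcal{L}_{X|Y}\cap(\mathcal{H}^{(\mathbf{s}_t)}_{X|Z})^c$, $\mathcal{B}_t=(\mathcal{L}_{X|Y})^c\cap(\mathcal{H}^{(\mathbf{s}_t)}_{X|Z})^c$. Assume $|\mathcal{B}_t|<|\mathcal{I}_t|$ and choose $\mathcal{B}'_t\subset\mathcal{I}_t$ with $|\mathcal{B}'_t|=|\mathcal{B}_t|$, $\mathcal{I}'_t=\mathcal{I}_t\setminus\mathcal{B}'_t$. Strong security scheme. Block 0: uniform random bits on $\mathcal{L}_{X|Y}$; secret frozen bits pre-shared by Alice and Bob (unknown to the eavesdropper) on $(\mathcal{L}_{X|Y})^c$; send $x_0^N=u_0^N\mathbf{G}_N$. After block $t$ (knowing $\mathbf{s}_t$): $u_t^{\mathcal{I}'_t}$ is the key stream; $u_t^{\mathcal{F}_t}$ and $u_t^{\mathcal{B}'_t}$ are placed (in a fixed agreed order) on $(\mathcal{L}_{X|Y})^c$ in block $t+1$.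 Block $t\ge1$: ciphertext $E_t=M_t\oplus u_{t-1}^{\mathcal{I}'_{t-1}}$, $|M_t|=|\mathcal{I}'_{t-1}|$, on $\mathcal{I}'_{t-1}$; uniform random bits on $\mathcal{R}_{t-1}$ and on $\mathcal{B}'_{t-1}$; $u_{t-1}^{\mathcal{F}_{t-1}},u_{t-1}^{\mathcal{B}'_{t-1}}$ on $(\mathcal{L}_{X|Y})^c$; send $x_t^N=u_t^N\mathbf{G}_N$. Bob decodes by successive cancellation on $\mathcal{L}_{X|Y}$ using previously decoded bits on $(\mathcal{L}_{X|Y})^c$. *)

theory Defs
  imports "HOL-Probability.Probability_Mass_Function"
begin

text \<open>Indices are 0-based: position i of a length-N vector corresponds to the
paper's index i+1.  Binary alphabet = bool, addition over GF(2) = (\<noteq>).\<close>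

definition sym_channel :: "(bool \<Rightarrow> 'y pmf) \<Rightarrow> bool" where
  "sym_channel W \<longleftrightarrow> (\<exists>\<pi>. \<pi> \<circ> \<pi> = id \<and> (\<forall>y. pmf (W True) y = pmf (W False) (\<pi> y)))"

definition bitrev :: "nat \<Rightarrow> nat \<Rightarrow> nat" where
  "bitrev n i = (\<Sum>k<n. if bit i k then 2 ^ (n - 1 - k) else 0)"

text \<open>Entry (i,j) of G_N = R F^{\<otimes>n}: (F^{\<otimes>n})(a,j)=1 iff the bits of j are
contained in the bits of a; R permutes rows by bit reversal.\<close>
definition polarG :: "nat \<Rightarrow> nat \<Rightarrow> nat \<Rightarrow> bool" where
  "polarG n i j \<longleftrightarrow> (\<forall>k<n. bit j k \<longrightarrow> bit (bitrev n i) k)"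

definition polar_enc :: "nat \<Rightarrow> bool list \<Rightarrow> bool list" where
  "polar_enc n u = map (\<lambda>j. odd (card {i. i < 2 ^ n \<and> u ! i \<and> polarG n i j})) [0..<2 ^ n]"

fun chan_list :: "('x \<Rightarrow> 'y pmf) list \<Rightarrow> 'x list \<Rightarrow> 'y list pmf" where
  "chan_list (W # Ws) (x # xs) = bind_pmf (W x) (\<lambda>y. bind_pmf (chan_list Ws xs) (\<lambda>ys. return_pmf (y # ys)))"
| "chan_list _ _ = return_pmf []"

definition unif_vec :: "nat \<Rightarrow> bool list pmf" where
  "unif_vec N = pmf_of_set {u. length u = N}"

definition bhatt :: "(bool \<times> 'c) pmf \<Rightarrow> real" where
  "bhatt P = (let PY = map_pmf snd P in
     2 * (\<Sum>y\<in>set_pmf PY. pmf PY y *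
           sqrt ((pmf P (False, y) / pmf PY y) * (pmf P (True, y) / pmf PY y))))"

definition polar_joint :: "nat \<Rightarrow> (bool \<Rightarrow> 'y pmf) list \<Rightarrow> (bool list \<times> 'y list) pmf" where
  "polar_joint n Ws = bind_pmf (unif_vec (2 ^ n))
     (\<lambda>u. bind_pmf (chan_list Ws (polar_enc n u)) (\<lambda>y. return_pmf (u, y)))"

definition bhatt_idx :: "nat \<Rightarrow> (bool \<Rightarrow> 'y pmf) list \<Rightarrow> nat \<Rightarrow> real" where
  "bhatt_idx n Ws i = bhatt (map_pmf (\<lambda>(u, y). (u ! i, (take i u, y))) (polar_joint n Ws))"

definition delta :: "nat \<Rightarrow> real \<Rightarrow> real" where
  "delta n \<beta> = 2 powr (- (real (2 ^ n) powr \<beta>))"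

definition Lset :: "nat \<Rightarrow> real \<Rightarrow> (bool \<Rightarrow> 'y pmf) \<Rightarrow> nat set" where
  "Lset n \<beta> W = {i. i < 2 ^ n \<and> bhatt_idx n (replicate (2 ^ n) W) i \<le> delta n \<beta>}"

text \<open>H^{(s)}_{X|Z} for a state sequence s^{1:N} given as the list of channels
used at the N positions (constant state = replicated channel).\<close>
definition Hset :: "nat \<Rightarrow> real \<Rightarrow> (bool \<Rightarrow> 'z pmf) list \<Rightarrow> nat set" where
  "Hset n \<beta> Ws = {i. i < 2 ^ n \<and> bhatt_idx n Ws i \<ge> 1 - delta n \<beta>}"

definition mi :: "('a \<times> 'b) pmf \<Rightarrow> real" where
  "mi P = (\<Sum>xy\<in>set_pmf P. pmf P xy *
            log 2 (pmf P xy / (pmf (map_pmf fst P) (fst xy) * pmf (map_pmf snd P) (snd xy))))"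

text \<open>A fresh uniform vector w supplies the (uniform) message M_t on I'_{t-1}
(ciphertext M_t xor u_{t-1} there) and the uniform random bits on R_{t-1} and B'_{t-1};
on the frozen positions (complement of L), position i carries u_{t-1}(sig i),
where sig is the agreed bijection from L^c onto F_{t-1} \<union> B'_{t-1}.\<close>
definition scheme_step :: "nat \<Rightarrow> nat set \<Rightarrow> nat set \<Rightarrow> (nat \<Rightarrow> nat) \<Rightarrow> bool list \<Rightarrow> bool list pmf" where
  "scheme_step n L Ip sig u = bind_pmf (unif_vec (2 ^ n))
     (\<lambda>w. return_pmf (map (\<lambda>i. if i \<in> L then (if i \<in> Ip then w ! i \<noteq> u ! i else w ! i)
                               else u ! (sig i)) [0..<2 ^ n]))"

text \<open>History of blocks 0..t: list of (u_t, z_t).  Block 0: u_0 uniform (random bits on L,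
uniformly distributed pre-shared secret frozen bits on L^c).  Wzl t is the list of
eavesdropper channels used in block t.\<close>
fun scheme_run :: "nat \<Rightarrow> nat set \<Rightarrow> (nat \<Rightarrow> nat set) \<Rightarrow> (nat \<Rightarrow> nat \<Rightarrow> nat)
                   \<Rightarrow> (nat \<Rightarrow> (bool \<Rightarrow> 'z pmf) list) \<Rightarrow> nat \<Rightarrow> (bool list \<times> 'z list) list pmf" where
  "scheme_run n L Ip sig Wzl 0 = bind_pmf (unif_vec (2 ^ n))
     (\<lambda>u. bind_pmf (chan_list (Wzl 0) (polar_enc n u)) (\<lambda>z. return_pmf [(u, z)]))"
| "scheme_run n L Ip sig Wzl (Suc t) = bind_pmf (scheme_run n L Ip sig Wzl t)
     (\<lambda>h. bind_pmf (scheme_step n L (Ip t) (sig (Suc t)) (fst (last h)))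
       (\<lambda>u'. bind_pmf (chan_list (Wzl (Suc t)) (polar_enc n u'))
         (\<lambda>z. return_pmf (h @ [(u', z)]))))"

definition leakage :: "nat \<Rightarrow> nat set \<Rightarrow> (nat \<Rightarrow> nat set) \<Rightarrow> (nat \<Rightarrow> nat \<Rightarrow> nat)
                   \<Rightarrow> (nat \<Rightarrow> (bool \<Rightarrow> 'z pmf) list) \<Rightarrow> nat \<Rightarrow> real" where
  "leakage n L Ip sig Wzl T = mi (map_pmf
     (\<lambda>h. (map (\<lambda>t. map (\<lambda>i. fst (h ! t) ! i) (sorted_list_of_set (Ip t))) [1..<Suc T],
           map (\<lambda>t. snd (h ! t)) [1..<Suc T]))
     (scheme_run n L Ip sig Wzl T))"

end

(*
  Everything is phrased with Shannon entropies of functions of the finite history of the scheme.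
  Two invariants are carried along the blocks.  First, the key bits of all earlier blocks together
  with the whole current block are jointly uniform: the information bits of a new block are fresh
  (a one-time pad on the key positions), and its frozen bits repeat, bijectively, bits of the
  previous block in F \<union> B', which are disjoint from its keys.  Second, the observations of blocks
  1..t leak at most t N (2 / ln 2) \<delta> about the hidden bits, i.e. the earlier keys and the current
  set H.  In a step, the past observations are independent of the new block given the past hidden
  bits; the earlier keys are independent of the new block word, which is uniform, so the new
  observation leaks about the new H-bits as in a polar code, where the chain rule and
  H(U_i | U^{1:i-1}, Z^N) \<ge> 1 - (2 / ln 2) (1 - Z(U_i | U^{1:i-1}, Z^N)) give at most
  |H| (2 / ln 2) \<delta>.
  The keys I' lie in the hidden bits, so the leakage is at most T N (2 / ln 2) \<delta>.
*)

theory Submission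
  imports Defs
begin

section \<open>Entropy of random variables on a finitely supported pmf\<close>

definition pmf_expect :: "'a pmf \<Rightarrow> ('a \<Rightarrow> real) \<Rightarrow> real" where
  "pmf_expect P g = (\<Sum>\<omega>\<in>set_pmf P. pmf P \<omega> * g \<omega>)"

definition prob_value :: "'a pmf \<Rightarrow> ('a \<Rightarrow> 'b) \<Rightarrow> 'a \<Rightarrow> real" where
  "prob_value P f \<omega> = pmf (map_pmf f P) (f \<omega>)"

definition pmf_entropy :: "'a pmf \<Rightarrow> ('a \<Rightarrow> 'b) \<Rightarrow> real" where
  "pmf_entropy P f = pmf_expect P (\<lambda>\<omega>. - log 2 (prob_value P f \<omega>))"

definition pmf_mutual_info :: "'a pmf \<Rightarrow> ('a \<Rightarrow> 'b) \<Rightarrow> ('a \<Rightarrow> 'c) \<Rightarrow> real" where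
  "pmf_mutual_info P f g = pmf_entropy P f + pmf_entropy P g - pmf_entropy P (\<lambda>\<omega>. (f \<omega>, g \<omega>))"

lemma pmf_expect_eq_expectation:
  "finite (set_pmf P) \<Longrightarrow> pmf_expect P g = measure_pmf.expectation P g"
  unfolding pmf_expect_def by (subst integral_measure_pmf_real[of "set_pmf P"]) (auto simp: mult.commute)

lemma pmf_expect_map:
  "finite (set_pmf P) \<Longrightarrow> pmf_expect (map_pmf f P) g = pmf_expect P (\<lambda>\<omega>. g (f \<omega>))"
  by (simp add: pmf_expect_eq_expectation)

lemma pmf_expect_cong:
  "(\<And>\<omega>. \<omega> \<in> set_pmf P \<Longrightarrow> g \<omega> = h \<omega>) \<Longrightarrow> pmf_expect P g = pmf_expect P h"
  unfolding pmf_expect_def by (auto intro!: sum.cong)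

lemma pmf_expect_add: "pmf_expect P (\<lambda>\<omega>. g \<omega> + h \<omega>) = pmf_expect P g + pmf_expect P h"
  unfolding pmf_expect_def by (simp add: distrib_left sum.distrib)

lemma pmf_expect_diff: "pmf_expect P (\<lambda>\<omega>. g \<omega> - h \<omega>) = pmf_expect P g - pmf_expect P h"
  unfolding pmf_expect_def by (simp add: right_diff_distrib sum_subtractf)

lemma pmf_expect_minus: "pmf_expect P (\<lambda>\<omega>. - g \<omega>) = - pmf_expect P g"
  unfolding pmf_expect_def by (simp add: sum_negf)

lemma pmf_expect_cmult: "pmf_expect P (\<lambda>\<omega>. c * g \<omega>) = c * pmf_expect P g"
  unfolding pmf_expect_def by (simp add: sum_distrib_left algebra_simps)

lemma pmf_expect_const: "finite (set_pmf P) \<Longrightarrow> pmf_expect P (\<lambda>\<omega>. c) = c"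
  unfolding pmf_expect_def by (simp add: sum_distrib_right[symmetric] sum_pmf_eq_1)

lemma pmf_expect_log: "pmf_expect P (\<lambda>\<omega>. log 2 (r \<omega>)) = pmf_expect P (\<lambda>\<omega>. ln (r \<omega>)) / ln 2"
  unfolding pmf_expect_def log_def by (simp add: sum_divide_distrib)

lemma pmf_expect_mono:
  "(\<And>\<omega>. \<omega> \<in> set_pmf P \<Longrightarrow> g \<omega> \<le> h \<omega>) \<Longrightarrow> pmf_expect P g \<le> pmf_expect P h"
  unfolding pmf_expect_def by (auto intro!: sum_mono mult_left_mono)

lemma pmf_expect_nonpos: "(\<And>\<omega>. \<omega> \<in> set_pmf P \<Longrightarrow> g \<omega> \<le> 0) \<Longrightarrow> pmf_expect P g \<le> 0"
  unfolding pmf_expect_def by (auto intro!: sum_nonpos mult_nonneg_nonpos)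

lemma pmf_expect_pos:
  assumes fin: "finite (set_pmf P)" and pos: "\<And>\<omega>. \<omega> \<in> set_pmf P \<Longrightarrow> r \<omega> > 0"
  shows "pmf_expect P r > 0"
proof -
  obtain \<omega> where \<omega>: "\<omega> \<in> set_pmf P" using set_pmf_not_empty[of P] by blast
  have "pmf P \<omega> * r \<omega> \<le> pmf_expect P r"
    unfolding pmf_expect_def using fin \<omega> pos[THEN less_imp_le] by (intro member_le_sum) auto
  moreover have "pmf P \<omega> * r \<omega> > 0" using \<omega> pos by (simp add: pmf_positive)
  ultimately show ?thesis by linarith
qed

lemma ln_defect_nonpos: "(x::real) > 0 \<Longrightarrow> ln x - (x - 1) \<le> 0"
  using ln_le_minus_one[of x] by simp

text \<open>The defect in Jensen's inequality for \<open>ln\<close> is the expectation of the nonpositive function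
  \<open>ln x - (x - 1)\<close> at \<open>x = r \<omega> / E r\<close>; this gives the inequality and its equality case at once.\<close>
lemma pmf_expect_ln_eq:
  assumes fin: "finite (set_pmf P)" and pos: "\<And>\<omega>. \<omega> \<in> set_pmf P \<Longrightarrow> r \<omega> > 0"
    and m: "m = pmf_expect P r"
  shows "pmf_expect P (\<lambda>\<omega>. ln (r \<omega>)) = ln m + pmf_expect P (\<lambda>\<omega>. ln (r \<omega> / m) - (r \<omega> / m - 1))"
proof -
  have m_pos: "m > 0" unfolding m by (rule pmf_expect_pos[OF fin pos])
  have "pmf_expect P (\<lambda>\<omega>. r \<omega> / m) = 1"
    using pmf_expect_cmult[of P "inverse m" r] m_pos by (simp add: divide_inverse mult.commute m)
  moreover have "pmf_expect P (\<lambda>\<omega>. ln (r \<omega> / m) - (r \<omega> / m - 1))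
      = pmf_expect P (\<lambda>\<omega>. ln (r \<omega>) - ln m - (r \<omega> / m - 1))"
  proof (rule pmf_expect_cong)
    fix \<omega> assume "\<omega> \<in> set_pmf P"
    then have "r \<omega> > 0" by (rule pos)
    with m_pos show "ln (r \<omega> / m) - (r \<omega> / m - 1) = ln (r \<omega>) - ln m - (r \<omega> / m - 1)"
      by (simp add: ln_div)
  qed
  ultimately show ?thesis using fin by (simp add: pmf_expect_diff pmf_expect_const)
qed

lemma pmf_expect_log_le:
  assumes fin: "finite (set_pmf P)" and pos: "\<And>\<omega>. \<omega> \<in> set_pmf P \<Longrightarrow> r \<omega> > 0"
  shows "pmf_expect P (\<lambda>\<omega>. log 2 (r \<omega>)) \<le> log 2 (pmf_expect P r)"
proof -
  let ?m = "pmf_expect P r"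
  have m_pos: "?m > 0" by (rule pmf_expect_pos[OF fin pos])
  have "pmf_expect P (\<lambda>\<omega>. ln (r \<omega> / ?m) - (r \<omega> / ?m - 1)) \<le> 0"
    using pos m_pos by (intro pmf_expect_nonpos ln_defect_nonpos) simp
  then have "pmf_expect P (\<lambda>\<omega>. ln (r \<omega>)) \<le> ln ?m"
    using pmf_expect_ln_eq[OF fin pos refl] by simp
  then show ?thesis unfolding pmf_expect_log by (simp add: log_def divide_right_mono)
qed

lemma pmf_expect_log_ge_imp_const:
  assumes fin: "finite (set_pmf P)" and pos: "\<And>\<omega>. \<omega> \<in> set_pmf P \<Longrightarrow> r \<omega> > 0"
    and ge: "pmf_expect P (\<lambda>\<omega>. log 2 (r \<omega>)) \<ge> log 2 (pmf_expect P r)"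
    and \<omega>: "\<omega> \<in> set_pmf P"
  shows "r \<omega> = pmf_expect P r"
proof -
  define m where "m = pmf_expect P r"
  have m_pos: "m > 0" unfolding m_def by (rule pmf_expect_pos[OF fin pos])
  define d where "d \<omega> = ln (r \<omega> / m) - (r \<omega> / m - 1)" for \<omega>
  have d_nonpos: "d \<omega> \<le> 0" if "\<omega> \<in> set_pmf P" for \<omega>
    unfolding d_def using pos[OF that] m_pos by (intro ln_defect_nonpos) simp
  have "pmf_expect P (\<lambda>\<omega>. ln (r \<omega>)) \<ge> ln m"
    using ge m_pos unfolding pmf_expect_log m_def[symmetric] by (simp add: log_def divide_le_cancel)
  then have "pmf_expect P d \<ge> 0"
    using pmf_expect_ln_eq[OF fin pos m_def] unfolding d_def by simp
  then have "pmf_expect P d = 0" using pmf_expect_nonpos[of P d] d_nonpos by simp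
  then have "(\<Sum>\<omega>\<in>set_pmf P. - (pmf P \<omega> * d \<omega>)) = 0"
    unfolding pmf_expect_def by (simp add: sum_negf)
  then have "pmf P \<omega> * d \<omega> = 0"
    using fin d_nonpos \<omega> by (subst (asm) sum_nonneg_eq_0_iff) (auto intro: mult_nonneg_nonpos)
  then have "ln (r \<omega> / m) = r \<omega> / m - 1"
    using \<omega> by (simp add: d_def set_pmf_eq)
  then have "r \<omega> / m = 1" using pos[OF \<omega>] m_pos by (intro ln_eq_minus_one) auto
  then show ?thesis using m_pos by (simp add: m_def)
qed

lemma prob_value_pos: "\<omega> \<in> set_pmf P \<Longrightarrow> prob_value P f \<omega> > 0"
  unfolding prob_value_def using pmf_positive by (metis imageI set_map_pmf)

lemma prob_value_eq_measure:
  "prob_value P f \<omega> = measure_pmf.prob P {\<omega>' \<in> set_pmf P. f \<omega>' = f \<omega>}"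
proof -
  have "{\<omega>' \<in> set_pmf P. f \<omega>' = f \<omega>} = f -` {f \<omega>} \<inter> set_pmf P" by auto
  then show ?thesis unfolding prob_value_def pmf_map by (simp add: measure_Int_set_pmf)
qed

lemma prob_value_mono:
  assumes "\<And>\<omega>'. \<omega>' \<in> set_pmf P \<Longrightarrow> f \<omega>' = f \<omega> \<Longrightarrow> g \<omega>' = g \<omega>"
  shows "prob_value P f \<omega> \<le> prob_value P g \<omega>"
  unfolding prob_value_eq_measure using assms by (intro measure_pmf.finite_measure_mono) auto

lemma pmf_entropy_map:
  "finite (set_pmf P) \<Longrightarrow> pmf_entropy (map_pmf g P) f = pmf_entropy P (\<lambda>\<omega>. f (g \<omega>))"
  unfolding pmf_entropy_def prob_value_def by (simp add: pmf_expect_map map_pmf_comp o_def)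

lemma pmf_entropy_const: "finite (set_pmf P) \<Longrightarrow> pmf_entropy P (\<lambda>\<omega>. c) = 0"
  unfolding pmf_entropy_def prob_value_def by (simp add: pmf_expect_const)

lemma pmf_entropy_mono_determined:
  assumes "\<And>\<omega> \<omega>'. \<omega> \<in> set_pmf P \<Longrightarrow> \<omega>' \<in> set_pmf P \<Longrightarrow> f \<omega>' = f \<omega> \<Longrightarrow> g \<omega>' = g \<omega>"
  shows "pmf_entropy P g \<le> pmf_entropy P f"
  unfolding pmf_entropy_def
proof (rule pmf_expect_mono)
  fix \<omega> assume \<omega>: "\<omega> \<in> set_pmf P"
  have "prob_value P f \<omega> \<le> prob_value P g \<omega>" using assms \<omega> by (intro prob_value_mono) blast
  then show "- log 2 (prob_value P g \<omega>) \<le> - log 2 (prob_value P f \<omega>)"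
    using prob_value_pos[OF \<omega>, of f] prob_value_pos[OF \<omega>, of g] by simp
qed

lemma pmf_entropy_eq_determined:
  assumes "\<And>\<omega> \<omega>'. \<omega> \<in> set_pmf P \<Longrightarrow> \<omega>' \<in> set_pmf P \<Longrightarrow> f \<omega>' = f \<omega> \<longleftrightarrow> g \<omega>' = g \<omega>"
  shows "pmf_entropy P f = pmf_entropy P g"
  using pmf_entropy_mono_determined[of P f g] pmf_entropy_mono_determined[of P g f] assms
  by (meson order_antisym)

lemma pmf_entropy_eq_expect_log_inverse:
  "pmf_entropy P f = pmf_expect P (\<lambda>\<omega>. log 2 (1 / prob_value P f \<omega>))"
  unfolding pmf_entropy_def
proof (rule pmf_expect_cong)
  fix \<omega> assume "\<omega> \<in> set_pmf P"
  then have "prob_value P f \<omega> > 0" by (rule prob_value_pos)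
  then show "- log 2 (prob_value P f \<omega>) = log 2 (1 / prob_value P f \<omega>)" by (simp add: log_divide)
qed

lemma pmf_expect_inverse_prob_value:
  assumes "finite (set_pmf P)"
  shows "pmf_expect P (\<lambda>\<omega>. 1 / prob_value P f \<omega>) = card (f ` set_pmf P)"
proof -
  have "pmf_expect P (\<lambda>\<omega>. 1 / prob_value P f \<omega>)
      = pmf_expect (map_pmf f P) (\<lambda>y. 1 / pmf (map_pmf f P) y)"
    using assms by (simp add: pmf_expect_map prob_value_def)
  also have "\<dots> = (\<Sum>y\<in>set_pmf (map_pmf f P). 1)"
    unfolding pmf_expect_def by (intro sum.cong) (auto simp: set_pmf_eq)
  finally show ?thesis by simp
qed

lemma pmf_entropy_le_log_card:
  assumes fin: "finite (set_pmf P)" and A: "finite A" "f ` set_pmf P \<subseteq> A"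
  shows "pmf_entropy P f \<le> log 2 (card A)"
proof -
  have "pmf_entropy P f \<le> log 2 (card (f ` set_pmf P))"
    using pmf_expect_log_le[OF fin, of "\<lambda>\<omega>. 1 / prob_value P f \<omega>"]
    by (simp add: pmf_entropy_eq_expect_log_inverse pmf_expect_inverse_prob_value fin prob_value_pos)
  also have "\<dots> \<le> log 2 (card A)"
  proof -
    have "card (f ` set_pmf P) > 0" using fin set_pmf_not_empty[of P] by (simp add: card_gt_0_iff)
    moreover have "card (f ` set_pmf P) \<le> card A" using A by (rule card_mono)
    ultimately show ?thesis by simp
  qed
  finally show ?thesis .
qed

lemma pmf_entropy_pmf_of_set:
  assumes fin: "finite (set_pmf P)" and A: "finite A" "A \<noteq> {}" and "map_pmf f P = pmf_of_set A"
  shows "pmf_entropy P f = log 2 (card A)"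
proof -
  have "f \<omega> \<in> A" if "\<omega> \<in> set_pmf P" for \<omega>
    using that A assms(4) by (metis imageI set_map_pmf set_pmf_of_set)
  then have "pmf_entropy P f = pmf_expect P (\<lambda>\<omega>. log 2 (card A))"
    unfolding pmf_entropy_eq_expect_log_inverse prob_value_def assms(4)
    using A by (intro pmf_expect_cong) simp
  then show ?thesis using fin by (simp add: pmf_expect_const)
qed

text \<open>Equality case of \<open>pmf_entropy_le_log_card\<close>, via the equality case of Jensen's inequality.\<close>
lemma pmf_entropy_ge_log_card_imp_prob_value:
  assumes fin: "finite (set_pmf P)" and A: "finite A" "f ` set_pmf P \<subseteq> A"
    and ge: "pmf_entropy P f \<ge> log 2 (card A)"
  shows "f ` set_pmf P = A" and "\<And>\<omega>. \<omega> \<in> set_pmf P \<Longrightarrow> prob_value P f \<omega> = 1 / card A"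
proof -
  define S where "S = f ` set_pmf P"
  have S: "finite S" "S \<noteq> {}" "S \<subseteq> A" unfolding S_def using fin A set_pmf_not_empty[of P] by auto
  have E: "pmf_expect P (\<lambda>\<omega>. 1 / prob_value P f \<omega>) = card S"
    unfolding S_def by (rule pmf_expect_inverse_prob_value[OF fin])
  have "card S > 0" "card S \<le> card A" using S A by (simp_all add: card_gt_0_iff card_mono)
  then have "log 2 (card S) \<le> log 2 (card A)" by simp
  with ge have ge': "pmf_expect P (\<lambda>\<omega>. log 2 (1 / prob_value P f \<omega>)) \<ge> log 2 (card S)"
    unfolding pmf_entropy_eq_expect_log_inverse by simp
  have pv: "prob_value P f \<omega> = 1 / card S" if "\<omega> \<in> set_pmf P" for \<omega>
    using pmf_expect_log_ge_imp_const[OF fin _ ge'[folded E] that] prob_value_pos[OF that, of f] E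
      \<open>card S > 0\<close>
    by (simp add: prob_value_pos field_simps)
  then have "pmf_entropy P f = pmf_expect P (\<lambda>\<omega>. log 2 (card S))"
    unfolding pmf_entropy_eq_expect_log_inverse by (intro pmf_expect_cong) simp
  then have "log 2 (card A) \<le> log 2 (card S)" using ge fin by (simp add: pmf_expect_const)
  then have "card A \<le> card S" using \<open>card S > 0\<close> \<open>card S \<le> card A\<close> by simp
  then show "f ` set_pmf P = A" using S A unfolding S_def by (intro card_seteq) auto
  then show "prob_value P f \<omega> = 1 / card A" if "\<omega> \<in> set_pmf P" for \<omega>
    using pv[OF that] unfolding S_def by simp
qed

lemma pmf_entropy_ge_log_card_imp_uniform:
  assumes fin: "finite (set_pmf P)" and A: "finite A" "f ` set_pmf P \<subseteq> A"
    and ge: "pmf_entropy P f \<ge> log 2 (card A)"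
  shows "map_pmf f P = pmf_of_set A"
proof (rule pmf_eqI)
  note S = pmf_entropy_ge_log_card_imp_prob_value[OF assms]
  have "A \<noteq> {}" using S(1) set_pmf_not_empty[of P] by auto
  fix y
  show "pmf (map_pmf f P) y = pmf (pmf_of_set A) y"
  proof (cases "y \<in> A")
    case True
    then obtain \<omega> where "\<omega> \<in> set_pmf P" "y = f \<omega>" using S(1) by auto
    then show ?thesis using S(2) A \<open>A \<noteq> {}\<close> True unfolding prob_value_def by simp
  next
    case False
    then show ?thesis using S(1) A \<open>A \<noteq> {}\<close> by (auto simp: pmf_eq_0_set_pmf)
  qed
qed

lemma pmf_bind_Pair:
  "pmf (bind_pmf M (\<lambda>x. map_pmf (Pair x) (K x))) (x0, y0) = pmf M x0 * pmf (K x0) y0"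
proof -
  have "pmf (map_pmf (Pair x) (K x)) (x0, y0) = indicator {x0} x * pmf (K x0) y0" for x
    by (cases "x = x0") (auto simp: pmf_map_inj' inj_on_def pmf_eq_0_set_pmf)
  then show ?thesis unfolding pmf_bind by (simp add: measure_pmf_single)
qed

lemma pmf_entropy_pair_kernel:
  assumes fin: "finite (set_pmf P)"
    and M: "map_pmf (\<lambda>\<omega>. (f \<omega>, g \<omega>)) P = bind_pmf (map_pmf f P) (\<lambda>x. map_pmf (Pair x) (K x))"
  shows "pmf_entropy P (\<lambda>\<omega>. (f \<omega>, g \<omega>))
       = pmf_entropy P f + pmf_expect P (\<lambda>\<omega>. - log 2 (pmf (K (f \<omega>)) (g \<omega>)))"
proof -
  have "pmf_entropy P (\<lambda>\<omega>. (f \<omega>, g \<omega>))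
      = pmf_expect P (\<lambda>\<omega>. - log 2 (prob_value P f \<omega>) + - log 2 (pmf (K (f \<omega>)) (g \<omega>)))"
    unfolding pmf_entropy_def
  proof (rule pmf_expect_cong)
    fix \<omega> assume \<omega>: "\<omega> \<in> set_pmf P"
    have split: "prob_value P (\<lambda>\<omega>. (f \<omega>, g \<omega>)) \<omega> = prob_value P f \<omega> * pmf (K (f \<omega>)) (g \<omega>)"
      unfolding prob_value_def M pmf_bind_Pair ..
    then have "pmf (K (f \<omega>)) (g \<omega>) > 0"
      using prob_value_pos[OF \<omega>, of "\<lambda>\<omega>. (f \<omega>, g \<omega>)"] prob_value_pos[OF \<omega>, of f]
      by (simp add: zero_less_mult_iff)
    then show "- log 2 (prob_value P (\<lambda>\<omega>. (f \<omega>, g \<omega>)) \<omega>)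
        = - log 2 (prob_value P f \<omega>) + - log 2 (pmf (K (f \<omega>)) (g \<omega>))"
      unfolding split using prob_value_pos[OF \<omega>, of f] by (simp add: log_mult)
  qed
  then show ?thesis unfolding pmf_entropy_def by (simp only: pmf_expect_add)
qed

lemma pmf_entropy_pair_indep:
  assumes fin: "finite (set_pmf P)"
    and M: "map_pmf (\<lambda>\<omega>. (f \<omega>, g \<omega>)) P = bind_pmf (map_pmf f P) (\<lambda>x. map_pmf (Pair x) K)"
  shows "pmf_entropy P (\<lambda>\<omega>. (f \<omega>, g \<omega>)) = pmf_entropy P f + pmf_entropy K (\<lambda>y. y)"
proof -
  have "map_pmf g P = map_pmf snd (map_pmf (\<lambda>\<omega>. (f \<omega>, g \<omega>)) P)" by (simp add: map_pmf_comp)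
  also have "\<dots> = K" unfolding M by (simp add: map_bind_pmf map_pmf_comp)
  finally have "map_pmf g P = K" .
  then have "pmf_expect P (\<lambda>\<omega>. - log 2 (pmf K (g \<omega>))) = pmf_entropy K (\<lambda>y. y)"
    using pmf_expect_map[OF fin, of g "\<lambda>y. - log 2 (pmf K y)"]
    unfolding pmf_entropy_def prob_value_def by simp
  then show ?thesis using pmf_entropy_pair_kernel[OF fin M] by simp
qed

lemma mi_map_pmf:
  assumes fin: "finite (set_pmf P)"
  shows "mi (map_pmf (\<lambda>\<omega>. (f \<omega>, g \<omega>)) P) = pmf_mutual_info P f g"
proof -
  let ?fg = "\<lambda>\<omega>. (f \<omega>, g \<omega>)"
  have "mi (map_pmf ?fg P)
      = pmf_expect P (\<lambda>\<omega>. log 2 (prob_value P ?fg \<omega> / (prob_value P f \<omega> * prob_value P g \<omega>)))"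
    unfolding mi_def pmf_expect_def[symmetric] using fin
    by (simp add: pmf_expect_map map_pmf_comp prob_value_def)
  also have "\<dots> = pmf_expect P (\<lambda>\<omega>. - log 2 (prob_value P f \<omega>) + - log 2 (prob_value P g \<omega>)
                                  - - log 2 (prob_value P ?fg \<omega>))"
  proof (rule pmf_expect_cong)
    fix \<omega> assume "\<omega> \<in> set_pmf P"
    then have "prob_value P f \<omega> > 0" "prob_value P g \<omega> > 0" "prob_value P ?fg \<omega> > 0"
      by (simp_all add: prob_value_pos)
    then show "log 2 (prob_value P ?fg \<omega> / (prob_value P f \<omega> * prob_value P g \<omega>))
        = - log 2 (prob_value P f \<omega>) + - log 2 (prob_value P g \<omega>) - - log 2 (prob_value P ?fg \<omega>)"
      by (simp add: log_divide log_mult)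
  qed
  finally show ?thesis
    unfolding pmf_mutual_info_def pmf_entropy_def by (simp only: pmf_expect_add pmf_expect_diff)
qed

lemma pmf_map_snd_eq_sum:
  assumes "finite A" and "fst ` set_pmf Q \<subseteq> A"
  shows "pmf (map_pmf snd Q) z = (\<Sum>x\<in>A. pmf Q (x, z))"
proof -
  have "snd -` {z} \<inter> set_pmf Q = A \<times> {z} \<inter> set_pmf Q" using assms(2) by force
  then have "pmf (map_pmf snd Q) z = measure_pmf.prob Q (A \<times> {z})"
    unfolding pmf_map by (metis measure_Int_set_pmf)
  also have "\<dots> = (\<Sum>x\<in>A. pmf Q (x, z))"
    using assms(1) by (simp add: measure_measure_pmf_finite sum.cartesian_product')
  finally show ?thesis .
qed

lemma cond_indep_coupling_mass_le_1:
  fixes a :: "'a \<Rightarrow> 'x" and b :: "'a \<Rightarrow> 'y" and c :: "'a \<Rightarrow> 'z"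
  assumes fin: "finite (set_pmf P)"
  defines "Qac \<equiv> map_pmf (\<lambda>\<omega>. (a \<omega>, c \<omega>)) P" and "Qbc \<equiv> map_pmf (\<lambda>\<omega>. (b \<omega>, c \<omega>)) P"
    and "Qc \<equiv> map_pmf c P"
  shows "(\<Sum>(x, y, z)\<in>(\<lambda>\<omega>. (a \<omega>, b \<omega>, c \<omega>)) ` set_pmf P. pmf Qac (x, z) * pmf Qbc (y, z) / pmf Qc z)
         \<le> 1"
proof -
  define X Y Z where "X = a ` set_pmf P" and "Y = b ` set_pmf P" and "Z = c ` set_pmf P"
  have finXYZ: "finite X" "finite Y" "finite Z" using fin by (simp_all add: X_def Y_def Z_def)
  have "map_pmf snd Qac = Qc" "map_pmf snd Qbc = Qc" by (simp_all add: Qac_def Qbc_def Qc_def map_pmf_comp)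
  then have marg: "(\<Sum>x\<in>X. pmf Qac (x, z)) = pmf Qc z" "(\<Sum>y\<in>Y. pmf Qbc (y, z)) = pmf Qc z" for z
    using pmf_map_snd_eq_sum[OF finXYZ(1), of Qac z] pmf_map_snd_eq_sum[OF finXYZ(2), of Qbc z]
    by (auto simp: X_def Y_def Qac_def Qbc_def image_image)
  have "(\<Sum>(x, y, z)\<in>(\<lambda>\<omega>. (a \<omega>, b \<omega>, c \<omega>)) ` set_pmf P. pmf Qac (x, z) * pmf Qbc (y, z) / pmf Qc z)
      \<le> (\<Sum>(x, y, z)\<in>X \<times> Y \<times> Z. pmf Qac (x, z) * pmf Qbc (y, z) / pmf Qc z)"
    using finXYZ by (intro sum_mono2) (auto simp: X_def Y_def Z_def)
  also have "\<dots> = (\<Sum>x\<in>X. \<Sum>y\<in>Y. \<Sum>z\<in>Z. pmf Qac (x, z) * pmf Qbc (y, z) / pmf Qc z)"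
    by (simp add: sum.cartesian_product')
  also have "\<dots> = (\<Sum>z\<in>Z. \<Sum>x\<in>X. \<Sum>y\<in>Y. pmf Qac (x, z) * pmf Qbc (y, z) / pmf Qc z)"
    by (subst sum.swap) (rule sum.cong[OF refl], rule sum.swap)
  also have "\<dots> = (\<Sum>z\<in>Z. (\<Sum>x\<in>X. pmf Qac (x, z)) * (\<Sum>y\<in>Y. pmf Qbc (y, z)) / pmf Qc z)"
    by (simp add: sum_product sum_divide_distrib)
  also have "\<dots> = (\<Sum>z\<in>Z. pmf Qc z)" by (simp add: marg)
  also have "\<dots> = 1" using finXYZ by (intro sum_pmf_eq_1) (auto simp: Z_def Qc_def)
  finally show ?thesis .
qed

lemma pmf_entropy_submodular:
  assumes fin: "finite (set_pmf P)"
  shows "pmf_entropy P (\<lambda>\<omega>. (a \<omega>, b \<omega>, c \<omega>)) + pmf_entropy P c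
         \<le> pmf_entropy P (\<lambda>\<omega>. (a \<omega>, c \<omega>)) + pmf_entropy P (\<lambda>\<omega>. (b \<omega>, c \<omega>))"
proof -
  let ?abc = "\<lambda>\<omega>. (a \<omega>, b \<omega>, c \<omega>)" and ?ac = "\<lambda>\<omega>. (a \<omega>, c \<omega>)" and ?bc = "\<lambda>\<omega>. (b \<omega>, c \<omega>)"
  define G where "G = (\<lambda>(x, y, z). pmf (map_pmf ?ac P) (x, z) * pmf (map_pmf ?bc P) (y, z)
                                  / (pmf (map_pmf ?abc P) (x, y, z) * pmf (map_pmf c P) z))"
  define r where "r \<omega> = G (?abc \<omega>)" for \<omega>
  have r_eq: "r \<omega> = prob_value P ?ac \<omega> * prob_value P ?bc \<omega> / (prob_value P ?abc \<omega> * prob_value P c \<omega>)"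
    for \<omega> unfolding r_def G_def prob_value_def by simp
  have r_pos: "r \<omega> > 0" if "\<omega> \<in> set_pmf P" for \<omega>
    unfolding r_eq using that by (simp add: prob_value_pos)
  have "pmf_expect P r = pmf_expect (map_pmf ?abc P) G"
    unfolding r_def using fin by (simp add: pmf_expect_map)
  also have "\<dots> = (\<Sum>(x, y, z)\<in>?abc ` set_pmf P.
                     pmf (map_pmf ?ac P) (x, z) * pmf (map_pmf ?bc P) (y, z) / pmf (map_pmf c P) z)"
  proof -
    have "pmf (map_pmf ?abc P) (?abc \<omega>) \<noteq> 0" if "\<omega> \<in> set_pmf P" for \<omega>
      using that by (simp add: pmf_eq_0_set_pmf)
    then show ?thesis unfolding pmf_expect_def G_def set_map_pmf by (intro sum.cong) auto
  qed
  also have "\<dots> \<le> 1" by (rule cond_indep_coupling_mass_le_1[OF fin])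
  finally have "log 2 (pmf_expect P r) \<le> 0" using pmf_expect_pos[OF fin, of r, OF r_pos] by simp
  then have "pmf_expect P (\<lambda>\<omega>. log 2 (r \<omega>)) \<le> 0"
    using pmf_expect_log_le[OF fin, of r, OF r_pos] by simp
  moreover have "pmf_expect P (\<lambda>\<omega>. log 2 (r \<omega>))
      = pmf_expect P (\<lambda>\<omega>. - log 2 (prob_value P ?abc \<omega>) + - log 2 (prob_value P c \<omega>)
                         - - log 2 (prob_value P ?ac \<omega>) - - log 2 (prob_value P ?bc \<omega>))"
  proof (rule pmf_expect_cong)
    fix \<omega> assume "\<omega> \<in> set_pmf P"
    then have "prob_value P ?abc \<omega> > 0" "prob_value P c \<omega> > 0"
      "prob_value P ?ac \<omega> > 0" "prob_value P ?bc \<omega> > 0" by (simp_all add: prob_value_pos)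
    then show "log 2 (r \<omega>) = - log 2 (prob_value P ?abc \<omega>) + - log 2 (prob_value P c \<omega>)
        - - log 2 (prob_value P ?ac \<omega>) - - log 2 (prob_value P ?bc \<omega>)"
      unfolding r_eq by (simp add: log_divide log_mult)
  qed
  ultimately show ?thesis unfolding pmf_entropy_def by (simp only: pmf_expect_add pmf_expect_diff)
qed

lemma pmf_entropy_subadditive:
  assumes fin: "finite (set_pmf P)"
  shows "pmf_entropy P (\<lambda>\<omega>. (a \<omega>, b \<omega>)) \<le> pmf_entropy P a + pmf_entropy P b"
proof -
  have "pmf_entropy P (\<lambda>\<omega>. (a \<omega>, b \<omega>, ())) + pmf_entropy P (\<lambda>\<omega>. ())
      \<le> pmf_entropy P (\<lambda>\<omega>. (a \<omega>, ())) + pmf_entropy P (\<lambda>\<omega>. (b \<omega>, ()))"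
    by (rule pmf_entropy_submodular[OF fin])
  moreover have "pmf_entropy P (\<lambda>\<omega>. (a \<omega>, b \<omega>, ())) = pmf_entropy P (\<lambda>\<omega>. (a \<omega>, b \<omega>))"
    "pmf_entropy P (\<lambda>\<omega>. (a \<omega>, ())) = pmf_entropy P a" "pmf_entropy P (\<lambda>\<omega>. (b \<omega>, ())) = pmf_entropy P b"
    by (rule pmf_entropy_eq_determined; simp)+
  ultimately show ?thesis using pmf_entropy_const[OF fin, of "()"] by simp
qed

lemma pmf_mutual_info_commute: "pmf_mutual_info P f g = pmf_mutual_info P g f"
  unfolding pmf_mutual_info_def
  using pmf_entropy_eq_determined[of P "\<lambda>\<omega>. (f \<omega>, g \<omega>)" "\<lambda>\<omega>. (g \<omega>, f \<omega>)"] by auto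

lemma pmf_mutual_info_mono_left:
  assumes fin: "finite (set_pmf P)"
    and det: "\<And>\<omega> \<omega>'. \<omega> \<in> set_pmf P \<Longrightarrow> \<omega>' \<in> set_pmf P \<Longrightarrow> f' \<omega> = f' \<omega>' \<Longrightarrow> f \<omega> = f \<omega>'"
  shows "pmf_mutual_info P f g \<le> pmf_mutual_info P f' g"
proof -
  have "pmf_entropy P (\<lambda>\<omega>. (f' \<omega>, g \<omega>, f \<omega>)) + pmf_entropy P f
      \<le> pmf_entropy P (\<lambda>\<omega>. (f' \<omega>, f \<omega>)) + pmf_entropy P (\<lambda>\<omega>. (g \<omega>, f \<omega>))"
    by (rule pmf_entropy_submodular[OF fin])
  moreover have "pmf_entropy P (\<lambda>\<omega>. (f' \<omega>, g \<omega>, f \<omega>)) = pmf_entropy P (\<lambda>\<omega>. (f' \<omega>, g \<omega>))"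
    "pmf_entropy P (\<lambda>\<omega>. (f' \<omega>, f \<omega>)) = pmf_entropy P f'"
    "pmf_entropy P (\<lambda>\<omega>. (g \<omega>, f \<omega>)) = pmf_entropy P (\<lambda>\<omega>. (f \<omega>, g \<omega>))"
    by (rule pmf_entropy_eq_determined; auto dest: det)+
  ultimately show ?thesis unfolding pmf_mutual_info_def by simp
qed

lemma pmf_mutual_info_mono_right:
  assumes "finite (set_pmf P)"
    and "\<And>\<omega> \<omega>'. \<omega> \<in> set_pmf P \<Longrightarrow> \<omega>' \<in> set_pmf P \<Longrightarrow> g' \<omega> = g' \<omega>' \<Longrightarrow> g \<omega> = g \<omega>'"
  shows "pmf_mutual_info P f g \<le> pmf_mutual_info P f g'"
  using pmf_mutual_info_mono_left[OF assms] by (simp add: pmf_mutual_info_commute[of P f])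

lemma pmf_mutual_info_map:
  "finite (set_pmf P) \<Longrightarrow> pmf_mutual_info (map_pmf h P) f g = pmf_mutual_info P (\<lambda>\<omega>. f (h \<omega>)) (\<lambda>\<omega>. g (h \<omega>))"
  unfolding pmf_mutual_info_def by (simp add: pmf_entropy_map)

text \<open>Chain rule for mutual information: \<open>I(k, a; z) = I(a; z) + I(k; z | a) \<le> I(a; z) + I(k; a, z)\<close>.\<close>
lemma pmf_mutual_info_pair_left_le:
  assumes fin: "finite (set_pmf P)"
  shows "pmf_mutual_info P (\<lambda>\<omega>. (k \<omega>, a \<omega>)) z \<le> pmf_mutual_info P a z + pmf_mutual_info P k (\<lambda>\<omega>. (a \<omega>, z \<omega>))"
proof -
  have "pmf_entropy P (\<lambda>\<omega>. ((k \<omega>, a \<omega>), z \<omega>)) = pmf_entropy P (\<lambda>\<omega>. (k \<omega>, a \<omega>, z \<omega>))"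
    by (rule pmf_entropy_eq_determined) auto
  then show ?thesis
    using pmf_entropy_subadditive[OF fin, of k a] unfolding pmf_mutual_info_def by simp
qed

lemma pmf_mutual_info_cond_indep_le:
  assumes fin: "finite (set_pmf P)"
    and indep: "pmf_entropy P (\<lambda>\<omega>. (x \<omega>, y \<omega>, (v \<omega>, z \<omega>))) - pmf_entropy P (\<lambda>\<omega>. (x \<omega>, (v \<omega>, z \<omega>)))
                = pmf_entropy P (\<lambda>\<omega>. (v0 \<omega>, y \<omega>)) - pmf_entropy P v0"
  shows "pmf_mutual_info P v (\<lambda>\<omega>. (y \<omega>, z \<omega>)) \<le> pmf_mutual_info P v0 y + pmf_mutual_info P v z"
proof -
  have "pmf_entropy P (\<lambda>\<omega>. (x \<omega>, y \<omega>, (v \<omega>, z \<omega>))) + pmf_entropy P (\<lambda>\<omega>. (v \<omega>, z \<omega>))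
      \<le> pmf_entropy P (\<lambda>\<omega>. (x \<omega>, (v \<omega>, z \<omega>))) + pmf_entropy P (\<lambda>\<omega>. (y \<omega>, (v \<omega>, z \<omega>)))"
    by (rule pmf_entropy_submodular[OF fin])
  moreover have "pmf_entropy P (\<lambda>\<omega>. (y \<omega>, (v \<omega>, z \<omega>))) = pmf_entropy P (\<lambda>\<omega>. (v \<omega>, (y \<omega>, z \<omega>)))"
    by (rule pmf_entropy_eq_determined) auto
  ultimately show ?thesis
    using indep pmf_entropy_subadditive[OF fin, of y z] unfolding pmf_mutual_info_def by simp
qed

lemma restrict_eq_iff: "restrict x J = restrict y J \<longleftrightarrow> (\<forall>j\<in>J. x j = y j)"
  unfolding restrict_def fun_eq_iff by metis

lemma restrict_Un_eq_iff:
  "restrict x (A \<union> B) = restrict y (A \<union> B) \<longleftrightarrow> restrict x A = restrict y A \<and> restrict x B = restrict y B"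
  unfolding restrict_eq_iff by blast

lemma restrict_nth_eq_iff:
  "length u = k \<Longrightarrow> length v = k \<Longrightarrow> restrict ((!) u) {..<k} = restrict ((!) v) {..<k} \<longleftrightarrow> u = v"
  by (auto simp: restrict_eq_iff list_eq_iff_nth_eq)

lemma pmf_entropy_bool_le_1: "finite (set_pmf P) \<Longrightarrow> pmf_entropy P (f :: 'a \<Rightarrow> bool) \<le> 1"
  using pmf_entropy_le_log_card[of P UNIV f] by simp

lemma pmf_entropy_restrict_le_card:
  assumes fin: "finite (set_pmf P)" and J: "finite J"
  shows "pmf_entropy P (\<lambda>\<omega>. restrict (b \<omega> :: 'j \<Rightarrow> bool) J) \<le> card J"
  using J
proof (induction J rule: finite_induct)
  case empty
  show ?case by (simp add: pmf_entropy_const[OF fin])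
next
  case (insert j J)
  have "pmf_entropy P (\<lambda>\<omega>. restrict (b \<omega>) (insert j J)) = pmf_entropy P (\<lambda>\<omega>. (b \<omega> j, restrict (b \<omega>) J))"
    by (rule pmf_entropy_eq_determined) (auto simp: restrict_eq_iff)
  also have "\<dots> \<le> pmf_entropy P (\<lambda>\<omega>. b \<omega> j) + pmf_entropy P (\<lambda>\<omega>. restrict (b \<omega>) J)"
    by (rule pmf_entropy_subadditive[OF fin])
  also have "\<dots> \<le> 1 + real (card J)" by (rule add_mono[OF pmf_entropy_bool_le_1[OF fin] insert.IH])
  finally show ?case by (simp only: card_insert_disjoint[OF insert(1,2)] of_nat_Suc)
qed

text \<open>Entropy \<open>card J\<close> means that the bits in \<open>J\<close> are uniform, hence so are those of every
  subfamily, and disjoint subfamilies are independent.\<close>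
lemma pmf_entropy_restrict_subset:
  assumes fin: "finite (set_pmf P)" and J: "finite J"
    and max: "pmf_entropy P (\<lambda>\<omega>. restrict (b \<omega> :: 'j \<Rightarrow> bool) J) \<ge> card J" and "J1 \<subseteq> J"
  shows "pmf_entropy P (\<lambda>\<omega>. restrict (b \<omega>) J1) = card J1"
proof -
  have J1: "finite J1" using J \<open>J1 \<subseteq> J\<close> by (rule finite_subset[rotated])
  have card_J1: "card (J - J1) = card J - card J1" "card J1 \<le> card J"
    using J J1 \<open>J1 \<subseteq> J\<close> by (simp_all add: card_Diff_subset card_mono)
  have "pmf_entropy P (\<lambda>\<omega>. restrict (b \<omega>) J)
      = pmf_entropy P (\<lambda>\<omega>. (restrict (b \<omega>) J1, restrict (b \<omega>) (J - J1)))"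
    using \<open>J1 \<subseteq> J\<close> by (intro pmf_entropy_eq_determined) (auto simp: restrict_eq_iff)
  also have "\<dots> \<le> pmf_entropy P (\<lambda>\<omega>. restrict (b \<omega>) J1) + pmf_entropy P (\<lambda>\<omega>. restrict (b \<omega>) (J - J1))"
    by (rule pmf_entropy_subadditive[OF fin])
  also have "\<dots> \<le> pmf_entropy P (\<lambda>\<omega>. restrict (b \<omega>) J1) + card (J - J1)"
    using pmf_entropy_restrict_le_card[OF fin, of "J - J1" b] J by simp
  finally have "pmf_entropy P (\<lambda>\<omega>. restrict (b \<omega>) J1) \<ge> card J1"
    using max card_J1 by (simp add: of_nat_diff)
  then show ?thesis using pmf_entropy_restrict_le_card[OF fin J1, of b] by simp
qed

lemma pmf_entropy_restrict_indep:
  assumes fin: "finite (set_pmf P)" and J: "finite J"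
    and max: "pmf_entropy P (\<lambda>\<omega>. restrict (b \<omega> :: 'j \<Rightarrow> bool) J) \<ge> card J"
    and "J1 \<subseteq> J" "J2 \<subseteq> J" "J1 \<inter> J2 = {}"
  shows "pmf_entropy P (\<lambda>\<omega>. (restrict (b \<omega>) J1, restrict (b \<omega>) J2))
       = pmf_entropy P (\<lambda>\<omega>. restrict (b \<omega>) J1) + pmf_entropy P (\<lambda>\<omega>. restrict (b \<omega>) J2)"
proof -
  have "pmf_entropy P (\<lambda>\<omega>. (restrict (b \<omega>) J1, restrict (b \<omega>) J2))
      = pmf_entropy P (\<lambda>\<omega>. restrict (b \<omega>) (J1 \<union> J2))"
    using \<open>J1 \<inter> J2 = {}\<close> by (intro pmf_entropy_eq_determined) (auto simp: restrict_eq_iff)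
  also have "\<dots> = card (J1 \<union> J2)" using assms by (intro pmf_entropy_restrict_subset) auto
  also have "\<dots> = real (card J1) + real (card J2)"
    using assms by (simp add: card_Un_disjoint finite_subset)
  also have "\<dots> = pmf_entropy P (\<lambda>\<omega>. restrict (b \<omega>) J1) + pmf_entropy P (\<lambda>\<omega>. restrict (b \<omega>) J2)"
    using pmf_entropy_restrict_subset[OF fin J max, of J1] pmf_entropy_restrict_subset[OF fin J max, of J2]
      assms by (simp only:)
  finally show ?thesis .
qed

section \<open>Bhattacharyya parameter and conditional entropy\<close>

text \<open>The gap is \<open>(a + b - 2 \<surd>(a b))\<^sup>2 / (2 (a + b))\<close>.\<close>
lemma sq_sum_div_le:
  fixes a b :: real assumes "a \<ge> 0" "b \<ge> 0" "a + b > 0"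
  shows "(a * a + b * b) / (a + b) \<le> 3 / 2 * (a + b) - 2 * sqrt (a * b)"
proof -
  define s where "s = 2 * sqrt (a * b)"
  have "s * s = 4 * (a * b)" unfolding s_def using assms by (simp add: algebra_simps)
  moreover have "0 \<le> (a + b - s) * (a + b - s)" by simp
  ultimately have "a * a + b * b \<le> (a + b) * (3 / 2 * (a + b) - s)" by (simp add: algebra_simps)
  then show ?thesis using assms unfolding s_def by (simp add: divide_le_eq mult.commute)
qed

lemma pmf_map_snd_bool:
  fixes R :: "(bool \<times> 'c) pmf"
  shows "pmf (map_pmf snd R) y = pmf R (False, y) + pmf R (True, y)"
proof -
  have "pmf (map_pmf snd R) y = (\<Sum>x\<in>UNIV. pmf R (x, y))" by (rule pmf_map_snd_eq_sum) auto
  then show ?thesis by (simp add: UNIV_bool)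
qed

lemma bhatt_eq_sum_sqrt:
  fixes R :: "(bool \<times> 'c) pmf"
  shows "bhatt R = 2 * (\<Sum>y\<in>set_pmf (map_pmf snd R). sqrt (pmf R (False, y) * pmf R (True, y)))"
  unfolding bhatt_def Let_def
proof (intro arg_cong[where f = "\<lambda>x. 2 * x"] sum.cong refl)
  fix y assume "y \<in> set_pmf (map_pmf snd R)"
  then have p: "pmf (map_pmf snd R) y > 0" by (simp add: pmf_positive)
  then show "pmf (map_pmf snd R) y * sqrt (pmf R (False, y) / pmf (map_pmf snd R) y
               * (pmf R (True, y) / pmf (map_pmf snd R) y))
      = sqrt (pmf R (False, y) * pmf R (True, y))"
    by (simp add: real_sqrt_divide real_sqrt_mult power2_eq_square[symmetric])
qed

lemma expect_posterior_le_bhatt: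
  fixes R :: "(bool \<times> 'c) pmf"
  assumes fin: "finite (set_pmf R)"
  shows "pmf_expect R (\<lambda>\<omega>. pmf R \<omega> / pmf (map_pmf snd R) (snd \<omega>)) \<le> 3 / 2 - bhatt R"
proof -
  define Y where "Y = map_pmf snd R"
  define F where "F \<omega> = pmf R \<omega> * pmf R \<omega> / pmf Y (snd \<omega>)" for \<omega>
  have finY: "finite (set_pmf Y)" unfolding Y_def using fin by simp
  have "pmf_expect R (\<lambda>\<omega>. pmf R \<omega> / pmf Y (snd \<omega>)) = (\<Sum>\<omega>\<in>(UNIV :: bool set) \<times> set_pmf Y. F \<omega>)"
    unfolding pmf_expect_def F_def using finY
    by (intro sum.mono_neutral_cong_left) (force simp: Y_def pmf_eq_0_set_pmf)+
  also have "\<dots> = (\<Sum>y\<in>set_pmf Y. F (False, y) + F (True, y))"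
    by (simp add: sum.cartesian_product' UNIV_bool sum.distrib)
  also have "\<dots> \<le> (\<Sum>y\<in>set_pmf Y. 3 / 2 * pmf Y y - 2 * sqrt (pmf R (False, y) * pmf R (True, y)))"
  proof (rule sum_mono)
    fix y assume "y \<in> set_pmf Y"
    then have "pmf Y y > 0" by (simp add: pmf_positive)
    moreover have "pmf Y y = pmf R (False, y) + pmf R (True, y)" unfolding Y_def by (rule pmf_map_snd_bool)
    ultimately show "F (False, y) + F (True, y)
        \<le> 3 / 2 * pmf Y y - 2 * sqrt (pmf R (False, y) * pmf R (True, y))"
      using sq_sum_div_le[of "pmf R (False, y)" "pmf R (True, y)"] unfolding F_def
      by (simp add: add_divide_distrib pmf_positive)
  qed
  also have "\<dots> = 3 / 2 * (\<Sum>y\<in>set_pmf Y. pmf Y y) - bhatt R"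
    by (simp add: bhatt_eq_sum_sqrt Y_def[symmetric] sum_subtractf sum_distrib_left)
  also have "\<dots> = 3 / 2 - bhatt R" using finY by (simp add: sum_pmf_eq_1)
  finally show ?thesis unfolding Y_def .
qed

text \<open>Jensen's inequality for \<open>- log p(x | y)\<close>, then \<open>log (1 + u) \<le> u / ln 2\<close>.\<close>
lemma cond_entropy_ge_bhatt:
  fixes R :: "(bool \<times> 'c) pmf"
  assumes fin: "finite (set_pmf R)"
  shows "pmf_entropy R (\<lambda>\<omega>. \<omega>) - pmf_entropy R snd \<ge> 1 - 2 / ln 2 * (1 - bhatt R)"
proof -
  define r where "r \<omega> = pmf R \<omega> / pmf (map_pmf snd R) (snd \<omega>)" for \<omega>
  have pos: "pmf R \<omega> > 0" "pmf (map_pmf snd R) (snd \<omega>) > 0" if "\<omega> \<in> set_pmf R" for \<omega>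
    using that by (simp_all add: pmf_positive)
  then have r_pos: "r \<omega> > 0" if "\<omega> \<in> set_pmf R" for \<omega> using that by (simp add: r_def)
  have "pmf_entropy R (\<lambda>\<omega>. \<omega>) - pmf_entropy R snd = pmf_expect R (\<lambda>\<omega>. - log 2 (r \<omega>))"
    unfolding pmf_entropy_def pmf_expect_diff[symmetric] prob_value_def
  proof (rule pmf_expect_cong)
    fix \<omega> assume "\<omega> \<in> set_pmf R"
    with pos[of \<omega>] show "- log 2 (pmf (map_pmf (\<lambda>\<omega>. \<omega>) R) \<omega>) - - log 2 (pmf (map_pmf snd R) (snd \<omega>))
        = - log 2 (r \<omega>)" by (simp add: r_def log_divide)
  qed
  also have "\<dots> \<ge> - log 2 (pmf_expect R r)"
    using pmf_expect_log_le[OF fin, of r, OF r_pos] by (simp add: pmf_expect_minus)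
  moreover have "log 2 (pmf_expect R r) \<le> 2 / ln 2 * (1 - bhatt R) - 1"
  proof -
    define d where "d = 1 - bhatt R"
    have E_pos: "pmf_expect R r > 0" by (rule pmf_expect_pos[OF fin, of r, OF r_pos])
    have E_le: "pmf_expect R r \<le> (1 + 2 * d) / 2"
      using expect_posterior_le_bhatt[OF fin] unfolding r_def d_def by simp
    then have d: "1 + 2 * d > 0" using E_pos by simp
    have "log 2 (pmf_expect R r) \<le> log 2 ((1 + 2 * d) / 2)" using E_pos E_le by simp
    also have "\<dots> = log 2 (1 + 2 * d) - 1" using d by (simp add: log_divide)
    also have "log 2 (1 + 2 * d) \<le> 2 / ln 2 * d"
      using ln_le_minus_one[OF d] unfolding log_def by (simp add: divide_right_mono)
    finally show ?thesis unfolding d_def by simp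
  qed
  ultimately show ?thesis by linarith
qed

section \<open>Information leaked by the unfrozen high-entropy bits of a polar code\<close>

lemma take_eq_iff_nth_eq:
  "k \<le> length u \<Longrightarrow> k \<le> length u' \<Longrightarrow> take k u = take k u' \<longleftrightarrow> (\<forall>i<k. u ! i = u' ! i)"
  by (simp add: list_eq_iff_nth_eq min_absorb2)

context
  fixes Q :: "(bool list \<times> 'z) pmf" and N :: nat
  assumes finQ: "finite (set_pmf Q)" and lenQ: "\<And>\<omega>. \<omega> \<in> set_pmf Q \<Longrightarrow> length (fst \<omega>) = N"
begin

lemma cond_entropy_bit_ge_bhatt:
  assumes "i < N"
  shows "pmf_entropy Q (\<lambda>\<omega>. (take (Suc i) (fst \<omega>), snd \<omega>)) - pmf_entropy Q (\<lambda>\<omega>. (take i (fst \<omega>), snd \<omega>))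
         \<ge> 1 - 2 / ln 2 * (1 - bhatt (map_pmf (\<lambda>(u, y). (u ! i, (take i u, y))) Q))"
proof -
  define g where "g = (\<lambda>(u :: bool list, y :: 'z). (u ! i, (take i u, y)))"
  have "pmf_entropy Q g = pmf_entropy Q (\<lambda>\<omega>. (take (Suc i) (fst \<omega>), snd \<omega>))"
  proof (rule pmf_entropy_eq_determined)
    fix \<omega> \<omega>' assume "\<omega> \<in> set_pmf Q" "\<omega>' \<in> set_pmf Q"
    then have "length (fst \<omega>) = N" "length (fst \<omega>') = N" by (simp_all add: lenQ)
    then show "g \<omega>' = g \<omega> \<longleftrightarrow> (take (Suc i) (fst \<omega>'), snd \<omega>') = (take (Suc i) (fst \<omega>), snd \<omega>)"
      unfolding g_def using assms by (auto simp: split_beta take_eq_iff_nth_eq less_Suc_eq)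
  qed
  moreover have "pmf_entropy Q (\<lambda>\<omega>. snd (g \<omega>)) = pmf_entropy Q (\<lambda>\<omega>. (take i (fst \<omega>), snd \<omega>))"
    by (simp add: g_def split_beta)
  ultimately show ?thesis
    using cond_entropy_ge_bhatt[of "map_pmf g Q"] finQ by (simp add: pmf_entropy_map g_def)
qed

text \<open>Chain rule, and conditioning on the bits before \<open>i\<close> outside \<open>H\<close> reduces entropy.\<close>
lemma cond_entropy_restrict_ge_sum:
  assumes "k \<le> N"
  shows "pmf_entropy Q (\<lambda>\<omega>. (restrict ((!) (fst \<omega>)) (H \<inter> {..<k}), snd \<omega>)) - pmf_entropy Q snd
         \<ge> (\<Sum>i\<in>H \<inter> {..<k}. pmf_entropy Q (\<lambda>\<omega>. (take (Suc i) (fst \<omega>), snd \<omega>))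
                             - pmf_entropy Q (\<lambda>\<omega>. (take i (fst \<omega>), snd \<omega>)))"
  using assms
proof (induction k)
  case 0
  have "pmf_entropy Q (\<lambda>\<omega>. (restrict ((!) (fst \<omega>)) (H \<inter> {..<0}), snd \<omega>)) = pmf_entropy Q snd"
    by (rule pmf_entropy_eq_determined) auto
  then show ?case by (simp only: lessThan_0 Int_empty_right sum.empty diff_self order_refl)
next
  case (Suc k)
  show ?case
  proof (cases "k \<in> H")
    case False
    then have "H \<inter> {..<Suc k} = H \<inter> {..<k}" using less_Suc_eq by auto
    then show ?thesis using Suc by simp
  next
    case True
    define S where "S = H \<inter> {..<k}"
    have ins: "H \<inter> {..<Suc k} = insert k S" unfolding S_def using True less_Suc_eq by auto
    define c where "c \<omega> = (restrict ((!) (fst \<omega>)) S, snd \<omega>)" for \<omega> :: "bool list \<times> 'z"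
    have "pmf_entropy Q (\<lambda>\<omega>. (fst \<omega> ! k, restrict ((!) (fst \<omega>)) ({..<k} - S), c \<omega>)) + pmf_entropy Q c
        \<le> pmf_entropy Q (\<lambda>\<omega>. (fst \<omega> ! k, c \<omega>)) + pmf_entropy Q (\<lambda>\<omega>. (restrict ((!) (fst \<omega>)) ({..<k} - S), c \<omega>))"
      by (rule pmf_entropy_submodular[OF finQ])
    moreover have "pmf_entropy Q (\<lambda>\<omega>. (fst \<omega> ! k, restrict ((!) (fst \<omega>)) ({..<k} - S), c \<omega>))
        = pmf_entropy Q (\<lambda>\<omega>. (take (Suc k) (fst \<omega>), snd \<omega>))"
      "pmf_entropy Q (\<lambda>\<omega>. (restrict ((!) (fst \<omega>)) ({..<k} - S), c \<omega>))
        = pmf_entropy Q (\<lambda>\<omega>. (take k (fst \<omega>), snd \<omega>))"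
      "pmf_entropy Q (\<lambda>\<omega>. (fst \<omega> ! k, c \<omega>))
        = pmf_entropy Q (\<lambda>\<omega>. (restrict ((!) (fst \<omega>)) (H \<inter> {..<Suc k}), snd \<omega>))"
      using Suc.prems lenQ
      by (intro pmf_entropy_eq_determined;
          auto simp: c_def S_def ins restrict_eq_iff take_eq_iff_nth_eq less_Suc_eq)+
    moreover have "(\<Sum>i\<in>H \<inter> {..<Suc k}. pmf_entropy Q (\<lambda>\<omega>. (take (Suc i) (fst \<omega>), snd \<omega>))
                                      - pmf_entropy Q (\<lambda>\<omega>. (take i (fst \<omega>), snd \<omega>)))
        = pmf_entropy Q (\<lambda>\<omega>. (take (Suc k) (fst \<omega>), snd \<omega>)) - pmf_entropy Q (\<lambda>\<omega>. (take k (fst \<omega>), snd \<omega>))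
          + (\<Sum>i\<in>S. pmf_entropy Q (\<lambda>\<omega>. (take (Suc i) (fst \<omega>), snd \<omega>))
                     - pmf_entropy Q (\<lambda>\<omega>. (take i (fst \<omega>), snd \<omega>)))"
      unfolding ins by (simp add: S_def)
    ultimately show ?thesis using Suc.IH[OF Suc_leD[OF Suc.prems]] unfolding S_def c_def by linarith
  qed
qed

lemma mutual_info_restrict_le_bhatt:
  assumes "H \<subseteq> {..<N}"
    and bhatt: "\<And>i. i \<in> H \<Longrightarrow> bhatt (map_pmf (\<lambda>(u, y). (u ! i, (take i u, y))) Q) \<ge> 1 - \<delta>"
  shows "pmf_mutual_info Q (\<lambda>\<omega>. restrict ((!) (fst \<omega>)) H) snd \<le> card H * (2 / ln 2 * \<delta>)"
proof -
  have finH: "finite H" using assms(1) finite_subset by blast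
  have "(\<Sum>i\<in>H. 1 - 2 / ln 2 * \<delta>)
      \<le> (\<Sum>i\<in>H. pmf_entropy Q (\<lambda>\<omega>. (take (Suc i) (fst \<omega>), snd \<omega>))
                  - pmf_entropy Q (\<lambda>\<omega>. (take i (fst \<omega>), snd \<omega>)))"
  proof (rule sum_mono)
    fix i assume i: "i \<in> H"
    have "2 / ln 2 * (1 - bhatt (map_pmf (\<lambda>(u, y). (u ! i, (take i u, y))) Q)) \<le> 2 / ln 2 * \<delta>"
      using bhatt[OF i] by (intro mult_left_mono) auto
    then show "1 - 2 / ln 2 * \<delta> \<le> pmf_entropy Q (\<lambda>\<omega>. (take (Suc i) (fst \<omega>), snd \<omega>))
                  - pmf_entropy Q (\<lambda>\<omega>. (take i (fst \<omega>), snd \<omega>))"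
      using cond_entropy_bit_ge_bhatt[of i] i assms(1) by auto
  qed
  also have "\<dots> \<le> pmf_entropy Q (\<lambda>\<omega>. (restrict ((!) (fst \<omega>)) H, snd \<omega>)) - pmf_entropy Q snd"
    using cond_entropy_restrict_ge_sum[of N H] assms(1) by (simp add: Int_absorb2)
  finally have "(\<Sum>i\<in>H. 1 - 2 / ln 2 * \<delta>)
      \<le> pmf_entropy Q (\<lambda>\<omega>. (restrict ((!) (fst \<omega>)) H, snd \<omega>)) - pmf_entropy Q snd" .
  moreover have "pmf_entropy Q (\<lambda>\<omega>. restrict ((!) (fst \<omega>)) H) \<le> card H"
    by (rule pmf_entropy_restrict_le_card[OF finQ finH])
  ultimately show ?thesis unfolding pmf_mutual_info_def by (simp add: algebra_simps)
qed

end


section \<open>The block-Markov scheme\<close>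

lemma finite_set_chan_list: "finite (set_pmf (chan_list (Ws :: ('x \<Rightarrow> 'y::finite pmf) list) xs))"
proof -
  have "set_pmf (chan_list Ws xs) \<subseteq> {ys. set ys \<subseteq> UNIV \<and> length ys \<le> length xs}"
    by (induction Ws xs rule: chan_list.induct) fastforce+
  then show ?thesis using finite_lists_length_le[of "UNIV :: 'y set"] finite_subset by auto
qed

lemma finite_bool_lists: "finite {u :: bool list. length u = N}"
  using finite_lists_length_eq[of "UNIV :: bool set" N] by simp

lemma bool_lists_nonempty: "{u :: bool list. length u = N} \<noteq> {}"
  by (auto intro: exI[of _ "replicate N False"])

lemma card_bool_lists: "card {u :: bool list. length u = N} = 2 ^ N"
  using card_lists_length_eq[of "UNIV :: bool set" N] by (simp add: card_UNIV_bool)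

lemma set_pmf_unif_vec: "set_pmf (unif_vec N) = {u. length u = N}"
  unfolding unif_vec_def using finite_bool_lists bool_lists_nonempty by simp

lemma finite_set_polar_joint: "finite (set_pmf (polar_joint n (Ws :: (bool \<Rightarrow> 'y::finite pmf) list)))"
  unfolding polar_joint_def using finite_bool_lists
  by (auto simp: set_pmf_unif_vec intro!: finite_set_chan_list)

lemma length_polar_joint: "\<omega> \<in> set_pmf (polar_joint n Ws) \<Longrightarrow> length (fst \<omega>) = 2 ^ n"
  unfolding polar_joint_def by (auto simp: set_pmf_unif_vec)

lemma pmf_entropy_unif_vec:
  assumes "finite (set_pmf Q)" "map_pmf f Q = unif_vec N"
  shows "pmf_entropy Q f = N"
  using assms pmf_entropy_pmf_of_set[OF assms(1) finite_bool_lists bool_lists_nonempty]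
  unfolding unif_vec_def by (simp add: card_bool_lists)

lemma pmf_entropy_restrict_unif_vec:
  assumes "L \<subseteq> {..<N}"
  shows "pmf_entropy (unif_vec N) (\<lambda>w. restrict ((!) w) L) = card L"
proof -
  have fin: "finite (set_pmf (unif_vec N))" by (simp add: set_pmf_unif_vec finite_bool_lists)
  have "pmf_entropy (unif_vec N) (\<lambda>w. restrict ((!) w) {..<N}) = pmf_entropy (unif_vec N) (\<lambda>w. w)"
    by (rule pmf_entropy_eq_determined) (auto simp: set_pmf_unif_vec restrict_eq_iff list_eq_iff_nth_eq)
  also have "\<dots> = card {..<N}" by (simp add: pmf_entropy_unif_vec[OF fin])
  finally show ?thesis using pmf_entropy_restrict_subset[OF fin, of "{..<N}"] assms by simp
qed

lemma map_pmf_unif_vec_involution: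
  assumes "\<And>w. length w = N \<Longrightarrow> length (f w) = N \<and> f (f w) = w"
  shows "map_pmf f (unif_vec N) = unif_vec N"
proof -
  have "bij_betw f {w. length w = N} {w. length w = N}"
    using assms by (intro bij_betw_byWitness[where f' = f]) auto
  then show ?thesis
    unfolding unif_vec_def by (rule map_pmf_of_set_bij_betw[OF _ bool_lists_nonempty finite_bool_lists])
qed

definition hist_bits :: "(bool list \<times> 'z) list \<Rightarrow> nat \<times> nat \<Rightarrow> bool" where
  "hist_bits h = (\<lambda>(s, i). fst (h ! s) ! i)"

definition block_word :: "nat \<Rightarrow> nat set \<Rightarrow> nat set \<Rightarrow> (nat \<Rightarrow> nat) \<Rightarrow> bool list \<Rightarrow> bool list \<Rightarrow> bool list" where
  "block_word N L Ip sg u w =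
     map (\<lambda>i. if i \<in> L then (if i \<in> Ip then w ! i \<noteq> u ! i else w ! i) else u ! (sg i)) [0..<N]"

declare scheme_run.simps [simp del]

locale polar_scheme =
  fixes n :: nat and L :: "nat set" and Ip :: "nat \<Rightarrow> nat set" and sig :: "nat \<Rightarrow> nat \<Rightarrow> nat"
    and Wzl :: "nat \<Rightarrow> (bool \<Rightarrow> 'z::finite pmf) list"
  assumes L_sub: "L \<subseteq> {..<2 ^ n}"
begin

abbreviation "N \<equiv> (2::nat) ^ n"

abbreviation P :: "nat \<Rightarrow> (bool list \<times> 'z list) list pmf" where
  "P t \<equiv> scheme_run n L Ip sig Wzl t"

abbreviation chan :: "nat \<Rightarrow> bool list \<Rightarrow> 'z list pmf" where
  "chan t u \<equiv> chan_list (Wzl t) (polar_enc n u)"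

abbreviation last_u :: "(bool list \<times> 'z list) list \<Rightarrow> bool list" where
  "last_u h \<equiv> fst (last h)"

abbreviation last_z :: "(bool list \<times> 'z list) list \<Rightarrow> 'z list" where
  "last_z h \<equiv> snd (last h)"

abbreviation last_info :: "(bool list \<times> 'z list) list \<Rightarrow> nat \<Rightarrow> bool" where
  "last_info h \<equiv> restrict ((!) (last_u h)) L"

lemma P_0: "P 0 = bind_pmf (unif_vec N) (\<lambda>u. map_pmf (\<lambda>z. [(u, z)]) (chan 0 u))"
  by (simp add: scheme_run.simps map_pmf_def)

lemma P_Suc:
  "P (Suc t) = bind_pmf (P t) (\<lambda>h.
     bind_pmf (map_pmf (block_word N L (Ip t) (sig (Suc t)) (last_u h)) (unif_vec N))
       (\<lambda>u'. map_pmf (\<lambda>z. h @ [(u', z)]) (chan (Suc t) u')))"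
  by (simp add: scheme_run.simps scheme_step_def block_word_def map_pmf_def)

lemma finite_set_P: "finite (set_pmf (P t))"
  by (induction t) (auto simp: P_0 P_Suc set_pmf_unif_vec finite_bool_lists intro!: finite_set_chan_list)

lemma set_P_SucE:
  assumes "h' \<in> set_pmf (P (Suc t))"
  obtains h w z where "h \<in> set_pmf (P t)" "length w = N"
    "h' = h @ [(block_word N L (Ip t) (sig (Suc t)) (last_u h) w, z)]"
  using assms unfolding P_Suc by (auto simp: set_pmf_unif_vec)

lemma length_set_P: "h \<in> set_pmf (P t) \<Longrightarrow> length h = Suc t \<and> (\<forall>s\<le>t. length (fst (h ! s)) = N)"
proof (induction t arbitrary: h)
  case 0
  then show ?case unfolding P_0 by (auto simp: set_pmf_unif_vec)
next
  case (Suc t)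
  then obtain h0 w z where h0: "h0 \<in> set_pmf (P t)"
    "h = h0 @ [(block_word N L (Ip t) (sig (Suc t)) (last_u h0) w, z)]"
    by (auto elim: set_P_SucE)
  then show ?case using Suc.IH[OF h0(1)] by (auto simp: nth_append block_word_def le_Suc_eq)
qed

lemma set_P_Suc_facts:
  assumes "h' \<in> set_pmf (P (Suc t))"
  shows "butlast h' \<in> set_pmf (P t)" and "\<And>s. s \<le> t \<Longrightarrow> h' ! s = butlast h' ! s"
    and "h' ! Suc t = last h'" and "length (last_u h') = N"
    and "\<And>i. i < N \<Longrightarrow> i \<notin> L \<Longrightarrow> last_u h' ! i = hist_bits (butlast h') (t, sig (Suc t) i)"
proof -
  obtain h w z where h: "h \<in> set_pmf (P t)" "h' = h @ [(block_word N L (Ip t) (sig (Suc t)) (last_u h) w, z)]"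
    using assms by (auto elim: set_P_SucE)
  have "length h = Suc t" using length_set_P[OF h(1)] by simp
  then have "last h = h ! t" by (metis diff_Suc_1 last_conv_nth list.size(3) nat.distinct(1))
  with h \<open>length h = Suc t\<close>
  show "butlast h' \<in> set_pmf (P t)" "\<And>s. s \<le> t \<Longrightarrow> h' ! s = butlast h' ! s" "h' ! Suc t = last h'"
    "length (last_u h') = N"
    "\<And>i. i < N \<Longrightarrow> i \<notin> L \<Longrightarrow> last_u h' ! i = hist_bits (butlast h') (t, sig (Suc t) i)"
    by (simp_all add: nth_append block_word_def hist_bits_def)
qed

lemma hist_bits_butlast:
  "h' \<in> set_pmf (P (Suc t)) \<Longrightarrow> s \<le> t \<Longrightarrow> hist_bits (butlast h') (s, i) = hist_bits h' (s, i)"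
  by (simp add: hist_bits_def set_P_Suc_facts(2))

lemma hist_bits_last: "h' \<in> set_pmf (P (Suc t)) \<Longrightarrow> hist_bits h' (Suc t, i) = last_u h' ! i"
  by (simp add: hist_bits_def set_P_Suc_facts(3))

lemma map_pmf_butlast_P: "map_pmf butlast (P (Suc t)) = P t"
  unfolding P_Suc by (simp add: map_bind_pmf map_pmf_comp bind_return_pmf')

lemma pmf_entropy_butlast: "pmf_entropy (P (Suc t)) (\<lambda>h'. f (butlast h')) = pmf_entropy (P t) f"
  using pmf_entropy_map[OF finite_set_P, of butlast "Suc t" f] map_pmf_butlast_P[of t] by simp

lemma pmf_mutual_info_butlast:
  "pmf_mutual_info (P (Suc t)) (\<lambda>h'. a (butlast h')) (\<lambda>h'. b (butlast h')) = pmf_mutual_info (P t) a b"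
  unfolding pmf_mutual_info_def
  using pmf_entropy_butlast[of t a] pmf_entropy_butlast[of t b] pmf_entropy_butlast[of t "\<lambda>h. (a h, b h)"]
  by simp

lemma map_pmf_P_channel:
  "map_pmf (\<lambda>h'. ((a (butlast h'), last_u h'), last_z h')) (P (Suc t))
   = bind_pmf (map_pmf (\<lambda>h'. (a (butlast h'), last_u h')) (P (Suc t)))
       (\<lambda>x. map_pmf (Pair x) (chan (Suc t) (snd x)))"
  unfolding P_Suc
  by (simp add: map_bind_pmf map_pmf_comp bind_assoc_pmf bind_return_pmf bind_map_pmf)

text \<open>The information bits of a new block are uniform and independent of the past: on the key
  positions the message is encrypted with a one-time pad.\<close>
lemma map_pmf_P_fresh:
  "map_pmf (\<lambda>h'. (a (butlast h'), last_info h')) (P (Suc t))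
   = bind_pmf (map_pmf a (P t)) (\<lambda>x. map_pmf (Pair x) (map_pmf (\<lambda>w. restrict ((!) w) L) (unif_vec N)))"
proof -
  define pad where "pad u w = map (\<lambda>i. if i \<in> Ip t then w ! i \<noteq> u ! i else w ! i) [0..<N]" for u w
  have pad: "map_pmf (pad u) (unif_vec N) = unif_vec N" for u
    by (rule map_pmf_unif_vec_involution) (auto simp: pad_def intro: nth_equalityI)
  have "restrict ((!) (block_word N L (Ip t) (sig (Suc t)) u w)) L = restrict ((!) (pad u w)) L" for u w
    using L_sub by (auto simp: block_word_def pad_def restrict_def fun_eq_iff)
  then have "map_pmf (\<lambda>h'. (a (butlast h'), last_info h')) (P (Suc t))
      = bind_pmf (P t) (\<lambda>h. map_pmf (\<lambda>w. (a h, restrict ((!) w) L)) (map_pmf (pad (last_u h)) (unif_vec N)))"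
    unfolding P_Suc by (simp add: map_bind_pmf map_pmf_comp bind_map_pmf bind_return_pmf map_pmf_def[symmetric])
  then show ?thesis unfolding pad by (simp add: bind_map_pmf map_pmf_comp)
qed

definition cond_entropy_channel :: "nat \<Rightarrow> real" where
  "cond_entropy_channel t =
     pmf_expect (P (Suc t)) (\<lambda>h'. - log 2 (pmf (chan (Suc t) (last_u h')) (last_z h')))"

lemma pmf_entropy_channel:
  "pmf_entropy (P (Suc t)) (\<lambda>h'. ((a (butlast h'), last_u h'), last_z h'))
   = pmf_entropy (P (Suc t)) (\<lambda>h'. (a (butlast h'), last_u h')) + cond_entropy_channel t"
  unfolding cond_entropy_channel_def using pmf_entropy_pair_kernel[OF finite_set_P map_pmf_P_channel] by simp

lemma pmf_entropy_fresh:
  "pmf_entropy (P (Suc t)) (\<lambda>h'. (a (butlast h'), last_info h')) = pmf_entropy (P t) a + card L"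
proof -
  have "map_pmf (\<lambda>h'. a (butlast h')) (P (Suc t)) = map_pmf a (P t)"
    using map_pmf_butlast_P[of t] by (metis map_pmf_comp)
  then have "pmf_entropy (P (Suc t)) (\<lambda>h'. (a (butlast h'), last_info h'))
      = pmf_entropy (P (Suc t)) (\<lambda>h'. a (butlast h'))
        + pmf_entropy (map_pmf (\<lambda>w. restrict ((!) w) L) (unif_vec N)) (\<lambda>y. y)"
    using map_pmf_P_fresh by (intro pmf_entropy_pair_indep[OF finite_set_P]) simp
  then show ?thesis
    by (simp add: pmf_entropy_butlast pmf_entropy_map set_pmf_unif_vec finite_bool_lists
                  pmf_entropy_restrict_unif_vec[OF L_sub])
qed

definition observed :: "nat \<Rightarrow> (bool list \<times> 'z list) list \<Rightarrow> 'z list list" where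
  "observed t h = map (\<lambda>s. snd (h ! s)) [1..<Suc t]"

lemma pmf_mutual_info_past_channel:
  "pmf_mutual_info (P (Suc t)) (\<lambda>h'. a (butlast h')) (\<lambda>h'. (last_u h', last_z h'))
   = pmf_mutual_info (P (Suc t)) (\<lambda>h'. a (butlast h')) last_u"
proof -
  have "pmf_entropy (P (Suc t)) (\<lambda>h'. (a (butlast h'), last_u h', last_z h'))
      = pmf_entropy (P (Suc t)) (\<lambda>h'. ((a (butlast h'), last_u h'), last_z h'))"
    by (rule pmf_entropy_eq_determined) (simp only: prod.inject; blast)
  moreover have "pmf_entropy (P (Suc t)) (\<lambda>h'. (last_u h', last_z h'))
      = pmf_entropy (P (Suc t)) (\<lambda>h'. (((\<lambda>_. ()) (butlast h'), last_u h'), last_z h'))"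
    by (rule pmf_entropy_eq_determined) (simp only: prod.inject; blast)
  moreover have "pmf_entropy (P (Suc t)) (\<lambda>h'. ((\<lambda>_. ()) (butlast h'), last_u h'))
      = pmf_entropy (P (Suc t)) last_u"
    by (rule pmf_entropy_eq_determined) simp
  ultimately show ?thesis
    using pmf_entropy_channel[of t a] pmf_entropy_channel[of t "\<lambda>_. ()"]
    unfolding pmf_mutual_info_def by linarith
qed

lemma observed_Suc:
  assumes "h' \<in> set_pmf (P (Suc t))"
  shows "observed (Suc t) h' = observed t (butlast h') @ [last_z h']"
proof -
  have "map (\<lambda>s. snd (h' ! s)) [1..<Suc t] = map (\<lambda>s. snd (butlast h' ! s)) [1..<Suc t]"
    using set_P_Suc_facts(2)[OF assms] by (intro map_cong) auto
  then show ?thesis unfolding observed_def using set_P_Suc_facts(3)[OF assms] by simp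
qed

lemma pmf_mutual_info_observed_Suc:
  "pmf_mutual_info (P (Suc t)) f (observed (Suc t))
   = pmf_mutual_info (P (Suc t)) f (\<lambda>h'. (observed t (butlast h'), last_z h'))"
proof -
  have "pmf_entropy (P (Suc t)) (observed (Suc t))
      = pmf_entropy (P (Suc t)) (\<lambda>h'. (observed t (butlast h'), last_z h'))"
    "pmf_entropy (P (Suc t)) (\<lambda>h'. (f h', observed (Suc t) h'))
      = pmf_entropy (P (Suc t)) (\<lambda>h'. (f h', (observed t (butlast h'), last_z h')))"
    by (rule pmf_entropy_eq_determined, simp add: observed_Suc)+
  then show ?thesis unfolding pmf_mutual_info_def by simp
qed

lemma map_pmf_P_polar_joint:
  assumes "map_pmf last_u (P (Suc t)) = unif_vec N"
  shows "map_pmf (\<lambda>h'. (last_u h', last_z h')) (P (Suc t)) = polar_joint n (Wzl (Suc t))"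
proof -
  have "map_pmf (\<lambda>h'. (last_u h', last_z h')) (P (Suc t))
      = bind_pmf (map_pmf last_u (P (Suc t))) (\<lambda>u. map_pmf (Pair u) (chan (Suc t) u))"
    unfolding P_Suc by (simp add: map_bind_pmf map_pmf_comp bind_assoc_pmf bind_return_pmf bind_map_pmf)
  then show ?thesis unfolding assms polar_joint_def by (simp add: map_pmf_def)
qed

end

section \<open>Secrecy of the scheme\<close>

text \<open>\<open>Hs t\<close> is \<open>H\<^sup>(\<^sup>s\<^sup>)\<^sub>X\<^sub>|\<^sub>Z\<close> of block \<open>t\<close>, \<open>Ip t\<close> its key positions \<open>I'\<^sub>t\<close> and \<open>Ss t = F\<^sub>t \<union> B'\<^sub>t\<close> the
  positions whose bits are repeated on the frozen positions of block \<open>t + 1\<close>.\<close>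
locale scheme_secrecy = polar_scheme n L Ip sig Wzl
  for n L Ip sig and Wzl :: "nat \<Rightarrow> (bool \<Rightarrow> 'z::finite pmf) list" +
  fixes Hs Ss :: "nat \<Rightarrow> nat set" and T :: nat and \<delta> :: real
  assumes Hs_sub: "Hs t \<subseteq> {..<2 ^ n}" and Ip_sub: "Ip t \<subseteq> Hs t" and Ip_Ss_disj: "Ip t \<inter> Ss t = {}"
    and Ss_sub: "t < T \<Longrightarrow> Ss t \<subseteq> Hs t"
    and sig_bij: "t < T \<Longrightarrow> bij_betw (sig (Suc t)) ({..<2 ^ n} - L) (Ss t)"
    and bhatt_Hs: "i \<in> Hs t \<Longrightarrow> bhatt_idx n (Wzl t) i \<ge> 1 - \<delta>"
    and delta_nonneg: "\<delta> \<ge> 0"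
begin

definition key_pos :: "nat \<Rightarrow> (nat \<times> nat) set" where
  "key_pos t = {(s, i). s < t \<and> i \<in> Ip s}"

text \<open>Positions (block, index) of the history that are jointly uniform, and those about which the
  eavesdropper learns little.\<close>
definition unif_pos :: "nat \<Rightarrow> (nat \<times> nat) set" where
  "unif_pos t = key_pos t \<union> {t} \<times> {..<N}"

definition hidden_pos :: "nat \<Rightarrow> (nat \<times> nat) set" where
  "hidden_pos t = key_pos t \<union> {t} \<times> Hs t"

abbreviation bits_on :: "(nat \<times> nat) set \<Rightarrow> (bool list \<times> 'z list) list \<Rightarrow> nat \<times> nat \<Rightarrow> bool" where
  "bits_on J h \<equiv> restrict (hist_bits h) J"

lemma key_pos_sub: "key_pos t \<subseteq> {..<t} \<times> {..<N}"
  unfolding key_pos_def using Ip_sub Hs_sub by fastforce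

lemma finite_key_pos: "finite (key_pos t)"
  using key_pos_sub finite_subset by blast

lemma key_pos_Suc: "key_pos (Suc t) = key_pos t \<union> {t} \<times> Ip t"
  unfolding key_pos_def using less_Suc_eq by auto

lemma bits_on_split_last:
  assumes "h1 \<in> set_pmf (P (Suc t))" "h2 \<in> set_pmf (P (Suc t))" and J0: "\<forall>(s, i)\<in>J0. s \<le> t"
  shows "bits_on (J0 \<union> {Suc t} \<times> K) h1 = bits_on (J0 \<union> {Suc t} \<times> K) h2
     \<longleftrightarrow> bits_on J0 (butlast h1) = bits_on J0 (butlast h2)
         \<and> restrict ((!) (last_u h1)) K = restrict ((!) (last_u h2)) K"
  using J0 hist_bits_butlast[OF assms(1)] hist_bits_butlast[OF assms(2)]
    hist_bits_last[OF assms(1)] hist_bits_last[OF assms(2)]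
  unfolding restrict_eq_iff by fastforce

text \<open>Off \<open>L\<close>, the new block word repeats the frozen-source bits of the previous block, bijectively;
  so the new block word and those bits determine each other given the information bits.\<close>
lemma last_u_eqI:
  assumes "t < T" and h: "h1 \<in> set_pmf (P (Suc t))" "h2 \<in> set_pmf (P (Suc t))"
    and src: "\<forall>j\<in>Ss t. hist_bits (butlast h1) (t, j) = hist_bits (butlast h2) (t, j)"
    and info: "last_info h1 = last_info h2"
  shows "last_u h1 = last_u h2"
proof (rule nth_equalityI)
  show "length (last_u h1) = length (last_u h2)"
    using set_P_Suc_facts(4)[OF h(1)] set_P_Suc_facts(4)[OF h(2)] by simp
  fix i assume "i < length (last_u h1)"
  then have i: "i < N" using set_P_Suc_facts(4)[OF h(1)] by simp
  show "last_u h1 ! i = last_u h2 ! i"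
  proof (cases "i \<in> L")
    case True
    then show ?thesis using info by (simp add: restrict_eq_iff)
  next
    case False
    then have "sig (Suc t) i \<in> Ss t" using sig_bij[OF \<open>t < T\<close>] i by (auto simp: bij_betw_def)
    then show ?thesis using src set_P_Suc_facts(5)[OF h(1) i False] set_P_Suc_facts(5)[OF h(2) i False] by simp
  qed
qed

lemma frozen_src_eqI:
  assumes "t < T" and h: "h1 \<in> set_pmf (P (Suc t))" "h2 \<in> set_pmf (P (Suc t))"
    and eq: "last_u h1 = last_u h2"
  shows "\<forall>j\<in>Ss t. hist_bits (butlast h1) (t, j) = hist_bits (butlast h2) (t, j)"
proof
  fix j assume "j \<in> Ss t"
  then obtain i where "i < N" "i \<notin> L" "j = sig (Suc t) i"
    using sig_bij[OF \<open>t < T\<close>] unfolding bij_betw_def by force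
  then show "hist_bits (butlast h1) (t, j) = hist_bits (butlast h2) (t, j)"
    using eq set_P_Suc_facts(5)[OF h(1)] set_P_Suc_facts(5)[OF h(2)] by metis
qed

text \<open>The new block word adds only its \<open>|L|\<close> fresh information bits to the entropy: its other bits
  copy frozen-source bits of block \<open>t\<close>, which \<open>a\<close> determines.\<close>
lemma pmf_entropy_past_last_u:
  assumes "t < T"
    and det: "\<And>h1 h2. h1 \<in> set_pmf (P t) \<Longrightarrow> h2 \<in> set_pmf (P t) \<Longrightarrow> a h1 = a h2 \<Longrightarrow>
                \<forall>j\<in>Ss t. hist_bits h1 (t, j) = hist_bits h2 (t, j)"
  shows "pmf_entropy (P (Suc t)) (\<lambda>h'. (a (butlast h'), last_u h')) = pmf_entropy (P t) a + card L"
proof -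
  have "pmf_entropy (P (Suc t)) (\<lambda>h'. (a (butlast h'), last_u h'))
      = pmf_entropy (P (Suc t)) (\<lambda>h'. (a (butlast h'), last_info h'))"
  proof (rule pmf_entropy_eq_determined)
    fix h1 h2 assume h: "h1 \<in> set_pmf (P (Suc t))" "h2 \<in> set_pmf (P (Suc t))"
    then show "(a (butlast h2), last_u h2) = (a (butlast h1), last_u h1)
        \<longleftrightarrow> (a (butlast h2), last_info h2) = (a (butlast h1), last_info h1)"
      using last_u_eqI[OF \<open>t < T\<close> h(2,1)] det[OF set_P_Suc_facts(1)[OF h(2)] set_P_Suc_facts(1)[OF h(1)]]
      by auto
  qed
  then show ?thesis by (simp add: pmf_entropy_fresh)
qed

lemma card_unif_pos_Suc:
  assumes "t < T"
  shows "card (key_pos (Suc t) \<union> {t} \<times> Ss t) + card L = card (unif_pos (Suc t))"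
proof -
  have "card L \<le> N" using card_mono[OF finite_lessThan L_sub] by simp
  then have "card (Ss t) + card L = N"
    using bij_betw_same_card[OF sig_bij[OF assms]] L_sub by (simp add: card_Diff_subset finite_subset)
  moreover have "key_pos (Suc t) \<inter> {t} \<times> Ss t = {}" "key_pos (Suc t) \<inter> {Suc t} \<times> {..<N} = {}"
    using Ip_Ss_disj[of t] unfolding key_pos_def by auto
  moreover have "finite (Ss t)"
    using Ss_sub[OF assms] Hs_sub[of t] by (meson finite_lessThan finite_subset subset_trans)
  ultimately show ?thesis
    unfolding unif_pos_def using finite_key_pos by (simp add: card_Un_disjoint card_cartesian_product)
qed

lemma unif_bits_0: "pmf_entropy (P 0) (bits_on (unif_pos 0)) \<ge> card (unif_pos 0)"
proof -
  have unif_pos_0: "unif_pos 0 = {0} \<times> {..<N}" unfolding unif_pos_def key_pos_def by auto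
  have "pmf_entropy (P 0) (bits_on (unif_pos 0)) = pmf_entropy (P 0) (\<lambda>h. fst (h ! 0))"
  proof (rule pmf_entropy_eq_determined)
    fix h1 h2 assume "h1 \<in> set_pmf (P 0)" "h2 \<in> set_pmf (P 0)"
    then have "length (fst (h1 ! 0)) = N" "length (fst (h2 ! 0)) = N" by (simp_all add: length_set_P)
    then show "bits_on (unif_pos 0) h2 = bits_on (unif_pos 0) h1 \<longleftrightarrow> fst (h2 ! 0) = fst (h1 ! 0)"
      unfolding unif_pos_0 restrict_eq_iff hist_bits_def by (auto simp: list_eq_iff_nth_eq)
  qed
  also have "\<dots> = N"
    by (rule pmf_entropy_unif_vec[OF finite_set_P]) (simp add: P_0 map_bind_pmf map_pmf_comp bind_return_pmf')
  finally show ?thesis by (simp add: unif_pos_0 card_cartesian_product)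
qed

lemma unif_bits_Suc:
  assumes "t < T" and IH: "pmf_entropy (P t) (bits_on (unif_pos t)) \<ge> card (unif_pos t)"
  shows "pmf_entropy (P (Suc t)) (bits_on (unif_pos (Suc t))) \<ge> card (unif_pos (Suc t))"
proof -
  define J where "J = key_pos (Suc t) \<union> {t} \<times> Ss t"
  have J_sub: "J \<subseteq> unif_pos t"
    unfolding J_def unif_pos_def key_pos_Suc using Ip_sub[of t] Ss_sub[OF assms(1)] Hs_sub[of t] by auto
  have past: "\<forall>(s, i)\<in>key_pos (Suc t). s \<le> t" unfolding key_pos_def by auto
  have "pmf_entropy (P (Suc t)) (bits_on (unif_pos (Suc t)))
      = pmf_entropy (P (Suc t)) (\<lambda>h'. (bits_on (key_pos (Suc t)) (butlast h'), last_u h'))"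
  proof (rule pmf_entropy_eq_determined)
    fix h1 h2 assume h: "h1 \<in> set_pmf (P (Suc t))" "h2 \<in> set_pmf (P (Suc t))"
    then show "bits_on (unif_pos (Suc t)) h2 = bits_on (unif_pos (Suc t)) h1
        \<longleftrightarrow> (bits_on (key_pos (Suc t)) (butlast h2), last_u h2)
            = (bits_on (key_pos (Suc t)) (butlast h1), last_u h1)"
      unfolding unif_pos_def bits_on_split_last[OF h(2,1) past]
      by (simp add: restrict_nth_eq_iff set_P_Suc_facts(4))
  qed
  also have "\<dots> = pmf_entropy (P (Suc t)) (\<lambda>h'. (bits_on J (butlast h'), last_u h'))"
  proof (rule pmf_entropy_eq_determined)
    fix h1 h2 assume h: "h1 \<in> set_pmf (P (Suc t))" "h2 \<in> set_pmf (P (Suc t))"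
    show "(bits_on (key_pos (Suc t)) (butlast h2), last_u h2)
            = (bits_on (key_pos (Suc t)) (butlast h1), last_u h1)
        \<longleftrightarrow> (bits_on J (butlast h2), last_u h2) = (bits_on J (butlast h1), last_u h1)"
      using frozen_src_eqI[OF assms(1) h(2,1)] unfolding J_def restrict_Un_eq_iff
      by (auto simp: restrict_eq_iff)
  qed
  also have "\<dots> = pmf_entropy (P t) (bits_on J) + card L"
    by (rule pmf_entropy_past_last_u[OF assms(1)]) (unfold J_def restrict_Un_eq_iff restrict_eq_iff, auto)
  also have "pmf_entropy (P t) (bits_on J) = card J"
    using pmf_entropy_restrict_subset[OF finite_set_P _ IH J_sub] finite_key_pos by (simp add: unif_pos_def)
  also have "real (card J) + card L = card (unif_pos (Suc t))"
    using card_unif_pos_Suc[OF assms(1)] unfolding J_def by (metis of_nat_add)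
  finally show ?thesis by linarith
qed

lemma unif_bits: "t \<le> T \<Longrightarrow> pmf_entropy (P t) (bits_on (unif_pos t)) \<ge> card (unif_pos t)"
  by (induction t) (simp_all add: unif_bits_0 unif_bits_Suc)


lemma last_u_uniform:
  assumes "Suc t \<le> T"
  shows "map_pmf last_u (P (Suc t)) = unif_vec N"
proof -
  have "pmf_entropy (P (Suc t)) last_u = pmf_entropy (P (Suc t)) (bits_on ({Suc t} \<times> {..<N}))"
  proof (rule pmf_entropy_eq_determined)
    fix h1 h2 assume h: "h1 \<in> set_pmf (P (Suc t))" "h2 \<in> set_pmf (P (Suc t))"
    then show "last_u h2 = last_u h1 \<longleftrightarrow> bits_on ({Suc t} \<times> {..<N}) h2 = bits_on ({Suc t} \<times> {..<N}) h1"
      using set_P_Suc_facts(4)[OF h(1)] set_P_Suc_facts(4)[OF h(2)]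
        hist_bits_last[OF h(1)] hist_bits_last[OF h(2)]
      by (auto simp: restrict_eq_iff list_eq_iff_nth_eq)
  qed
  also have "\<dots> = card ({Suc t} \<times> {..<N})"
    using unif_bits[OF assms] finite_key_pos
    by (intro pmf_entropy_restrict_subset[OF finite_set_P, of "unif_pos (Suc t)"]) (auto simp: unif_pos_def)
  finally have "pmf_entropy (P (Suc t)) last_u \<ge> log 2 (card {u :: bool list. length u = N})"
    by (simp add: card_bool_lists card_cartesian_product)
  then show ?thesis
    unfolding unif_vec_def using set_P_Suc_facts(4)
    by (intro pmf_entropy_ge_log_card_imp_uniform[OF finite_set_P finite_bool_lists]) auto
qed

lemma hidden_bits_Suc_eqI:
  assumes h: "h1 \<in> set_pmf (P (Suc t))" "h2 \<in> set_pmf (P (Suc t))"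
    and eq: "bits_on (hidden_pos t) (butlast h1) = bits_on (hidden_pos t) (butlast h2)"
      "last_u h1 = last_u h2"
  shows "bits_on (hidden_pos (Suc t)) h1 = bits_on (hidden_pos (Suc t)) h2"
proof -
  have "key_pos (Suc t) \<subseteq> hidden_pos t" unfolding key_pos_Suc hidden_pos_def using Ip_sub by auto
  then have "bits_on (key_pos (Suc t)) (butlast h1) = bits_on (key_pos (Suc t)) (butlast h2)"
    using eq(1) unfolding restrict_eq_iff by blast
  moreover have past: "\<forall>(s, i)\<in>key_pos (Suc t). s \<le> t" unfolding key_pos_def by auto
  ultimately show ?thesis unfolding hidden_pos_def[of "Suc t"] bits_on_split_last[OF h past] using eq(2) by simp
qed

lemma frozen_src_of_hidden:
  "t < T \<Longrightarrow> bits_on (hidden_pos t) h1 = bits_on (hidden_pos t) h2 \<Longrightarrow>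
   \<forall>j\<in>Ss t. hist_bits h1 (t, j) = hist_bits h2 (t, j)"
  using Ss_sub unfolding hidden_pos_def restrict_eq_iff by blast

lemma pmf_entropy_past_channel:
  assumes "t < T"
    and "\<And>h1 h2. h1 \<in> set_pmf (P t) \<Longrightarrow> h2 \<in> set_pmf (P t) \<Longrightarrow> a h1 = a h2 \<Longrightarrow>
           \<forall>j\<in>Ss t. hist_bits h1 (t, j) = hist_bits h2 (t, j)"
  shows "pmf_entropy (P (Suc t)) (\<lambda>h'. ((a (butlast h'), last_u h'), last_z h'))
         = pmf_entropy (P t) a + card L + cond_entropy_channel t"
  using pmf_entropy_channel[of t a] pmf_entropy_past_last_u[OF assms] by simp

text \<open>Given the hidden bits of the past, the past observations are independent of the new block
  and its observation.\<close>
lemma mutual_info_hidden_Suc_le: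
  assumes "t < T"
  shows "pmf_mutual_info (P (Suc t)) (bits_on (hidden_pos (Suc t))) (observed (Suc t))
         \<le> pmf_mutual_info (P t) (bits_on (hidden_pos t)) (observed t)
           + pmf_mutual_info (P (Suc t)) (bits_on (hidden_pos (Suc t))) last_z"
proof -
  let ?V = "bits_on (hidden_pos t)" and ?O = "observed t" and ?V' = "bits_on (hidden_pos (Suc t))"
  have "pmf_entropy (P (Suc t)) (\<lambda>h'. ((?V (butlast h'), last_u h'), ?O (butlast h'), (?V' h', last_z h')))
      = pmf_entropy (P (Suc t)) (\<lambda>h'. (((?V (butlast h'), ?O (butlast h')), last_u h'), last_z h'))"
    "pmf_entropy (P (Suc t)) (\<lambda>h'. ((?V (butlast h'), last_u h'), (?V' h', last_z h')))
      = pmf_entropy (P (Suc t)) (\<lambda>h'. ((?V (butlast h'), last_u h'), last_z h'))"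
    by (rule pmf_entropy_eq_determined, (simp only: prod.inject), (metis hidden_bits_Suc_eqI))+
  moreover have "pmf_entropy (P (Suc t)) (\<lambda>h'. (((?V (butlast h'), ?O (butlast h')), last_u h'), last_z h'))
      = pmf_entropy (P t) (\<lambda>h. (?V h, ?O h)) + card L + cond_entropy_channel t"
    by (rule pmf_entropy_past_channel[OF assms])
       (simp only: prod.inject, rule frozen_src_of_hidden[OF assms], erule conjunct1)
  moreover have "pmf_entropy (P (Suc t)) (\<lambda>h'. ((?V (butlast h'), last_u h'), last_z h'))
      = pmf_entropy (P t) ?V + card L + cond_entropy_channel t"
    by (rule pmf_entropy_past_channel[OF assms]) (rule frozen_src_of_hidden[OF assms])
  ultimately have "pmf_mutual_info (P (Suc t)) ?V' (\<lambda>h'. (?O (butlast h'), last_z h'))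
      \<le> pmf_mutual_info (P (Suc t)) (\<lambda>h'. ?V (butlast h')) (\<lambda>h'. ?O (butlast h'))
        + pmf_mutual_info (P (Suc t)) ?V' last_z"
    using pmf_entropy_butlast[of t "\<lambda>h. (?V h, ?O h)"] pmf_entropy_butlast[of t ?V]
    by (intro pmf_mutual_info_cond_indep_le[OF finite_set_P, where x = "\<lambda>h'. (?V (butlast h'), last_u h')"])
       simp
  then show ?thesis
    using pmf_mutual_info_butlast[of t ?V ?O] unfolding pmf_mutual_info_observed_Suc by linarith
qed

lemma mutual_info_keys_last_u:
  assumes "Suc t \<le> T"
  shows "pmf_mutual_info (P (Suc t)) (\<lambda>h'. bits_on (key_pos (Suc t)) (butlast h')) last_u = 0"
proof -
  let ?K = "\<lambda>h'. bits_on (key_pos (Suc t)) (butlast h')" and ?last = "{Suc t} \<times> {..<N}"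
  have past: "\<forall>(s, i)\<in>key_pos (Suc t). s \<le> t" unfolding key_pos_def by auto
  have K_eq: "?K h' = bits_on (key_pos (Suc t)) h'" if "h' \<in> set_pmf (P (Suc t))" for h'
    using hist_bits_butlast[OF that] past unfolding restrict_def by (auto simp: fun_eq_iff)
  have u_eq: "last_u h1 = last_u h2 \<longleftrightarrow> bits_on ?last h1 = bits_on ?last h2"
    if "h1 \<in> set_pmf (P (Suc t))" "h2 \<in> set_pmf (P (Suc t))" for h1 h2
    using set_P_Suc_facts(4)[OF that(1)] set_P_Suc_facts(4)[OF that(2)]
      hist_bits_last[OF that(1)] hist_bits_last[OF that(2)]
    unfolding restrict_eq_iff by (auto simp: list_eq_iff_nth_eq)
  have "pmf_entropy (P (Suc t)) ?K = pmf_entropy (P (Suc t)) (bits_on (key_pos (Suc t)))"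
    by (rule pmf_entropy_eq_determined) (simp add: K_eq)
  moreover have "pmf_entropy (P (Suc t)) last_u = pmf_entropy (P (Suc t)) (bits_on ?last)"
    by (rule pmf_entropy_eq_determined) (simp add: u_eq)
  moreover have "pmf_entropy (P (Suc t)) (\<lambda>h'. (?K h', last_u h'))
      = pmf_entropy (P (Suc t)) (\<lambda>h'. (bits_on (key_pos (Suc t)) h', bits_on ?last h'))"
    by (rule pmf_entropy_eq_determined) (simp add: K_eq u_eq)
  moreover have "pmf_entropy (P (Suc t)) (\<lambda>h'. (bits_on (key_pos (Suc t)) h', bits_on ?last h'))
      = pmf_entropy (P (Suc t)) (bits_on (key_pos (Suc t))) + pmf_entropy (P (Suc t)) (bits_on ?last)"
    using unif_bits[OF assms] finite_key_pos
    by (intro pmf_entropy_restrict_indep[OF finite_set_P, of "unif_pos (Suc t)"])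
       (auto simp: unif_pos_def key_pos_def)
  ultimately show ?thesis unfolding pmf_mutual_info_def by linarith
qed

text \<open>The key bits of earlier blocks are independent of the new block word, and the observation
  depends on them only through that word.\<close>
lemma mutual_info_hidden_last_le:
  assumes "Suc t \<le> T"
  shows "pmf_mutual_info (P (Suc t)) (bits_on (hidden_pos (Suc t))) last_z
         \<le> pmf_mutual_info (P (Suc t)) (\<lambda>h'. restrict ((!) (last_u h')) (Hs (Suc t))) last_z"
proof -
  let ?K = "\<lambda>h'. bits_on (key_pos (Suc t)) (butlast h')"
    and ?A = "\<lambda>h'. restrict ((!) (last_u h')) (Hs (Suc t))"
  have past: "\<forall>(s, i)\<in>key_pos (Suc t). s \<le> t" unfolding key_pos_def by auto
  have "pmf_mutual_info (P (Suc t)) (bits_on (hidden_pos (Suc t))) last_z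
      \<le> pmf_mutual_info (P (Suc t)) (\<lambda>h'. (?K h', ?A h')) last_z"
  proof (rule pmf_mutual_info_mono_left[OF finite_set_P])
    fix h1 h2 assume h: "h1 \<in> set_pmf (P (Suc t))" "h2 \<in> set_pmf (P (Suc t))"
    show "(?K h1, ?A h1) = (?K h2, ?A h2) \<Longrightarrow> bits_on (hidden_pos (Suc t)) h1 = bits_on (hidden_pos (Suc t)) h2"
      unfolding hidden_pos_def bits_on_split_last[OF h past] by simp
  qed
  also have "\<dots> \<le> pmf_mutual_info (P (Suc t)) ?A last_z + pmf_mutual_info (P (Suc t)) ?K (\<lambda>h'. (?A h', last_z h'))"
    by (rule pmf_mutual_info_pair_left_le[OF finite_set_P])
  also have "pmf_mutual_info (P (Suc t)) ?K (\<lambda>h'. (?A h', last_z h'))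
      \<le> pmf_mutual_info (P (Suc t)) ?K (\<lambda>h'. (last_u h', last_z h'))"
    by (rule pmf_mutual_info_mono_right[OF finite_set_P]) simp
  also have "\<dots> = 0"
    using pmf_mutual_info_past_channel[of t "bits_on (key_pos (Suc t))"] mutual_info_keys_last_u[OF assms]
    by linarith
  finally show ?thesis by linarith
qed

text \<open>The new block word is uniform, so its bits in \<open>Hs (Suc t)\<close> leak as through a polar code.\<close>
lemma mutual_info_last_le:
  assumes "Suc t \<le> T"
  shows "pmf_mutual_info (P (Suc t)) (\<lambda>h'. restrict ((!) (last_u h')) (Hs (Suc t))) last_z
         \<le> N * (2 / ln 2 * \<delta>)"
proof -
  let ?Q = "polar_joint n (Wzl (Suc t))"
  have "pmf_mutual_info (P (Suc t)) (\<lambda>h'. restrict ((!) (last_u h')) (Hs (Suc t))) last_z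
      = pmf_mutual_info ?Q (\<lambda>\<omega>. restrict ((!) (fst \<omega>)) (Hs (Suc t))) snd"
    unfolding map_pmf_P_polar_joint[OF last_u_uniform[OF assms], symmetric]
    by (simp add: pmf_mutual_info_map[OF finite_set_P])
  also have "\<dots> \<le> card (Hs (Suc t)) * (2 / ln 2 * \<delta>)"
    using bhatt_Hs Hs_sub unfolding bhatt_idx_def
    by (intro mutual_info_restrict_le_bhatt[OF finite_set_polar_joint length_polar_joint]) auto
  also have "\<dots> \<le> N * (2 / ln 2 * \<delta>)"
    using card_mono[OF _ Hs_sub, of "Suc t"] delta_nonneg by (intro mult_right_mono) auto
  finally show ?thesis .
qed

lemma mutual_info_hidden_observed_le:
  "t \<le> T \<Longrightarrow> pmf_mutual_info (P t) (bits_on (hidden_pos t)) (observed t) \<le> t * (N * (2 / ln 2 * \<delta>))"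
proof (induction t)
  case 0
  have "pmf_entropy (P 0) (\<lambda>h. (bits_on (hidden_pos 0) h, [] :: 'z list list))
      = pmf_entropy (P 0) (bits_on (hidden_pos 0))"
    by (rule pmf_entropy_eq_determined) simp
  then have mi0: "pmf_mutual_info (P 0) (bits_on (hidden_pos 0)) (\<lambda>h. [] :: 'z list list) = 0"
    using pmf_entropy_const[OF finite_set_P[of 0], where c = "[] :: 'z list list"]
    unfolding pmf_mutual_info_def by linarith
  moreover have "observed 0 = (\<lambda>h. [])" unfolding observed_def by simp
  ultimately show ?case by (simp only: mi0 of_nat_0 mult_zero_left order_refl)
next
  case (Suc t)
  then have "t < T" by simp
  have "real (Suc t) * (N * (2 / ln 2 * \<delta>)) = t * (N * (2 / ln 2 * \<delta>)) + N * (2 / ln 2 * \<delta>)"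
    by (simp only: of_nat_Suc distrib_right mult_1_left add.commute)
  then show ?case
    using Suc.IH \<open>t < T\<close> mutual_info_hidden_Suc_le[OF \<open>t < T\<close>]
      mutual_info_hidden_last_le[OF Suc.prems] mutual_info_last_le[OF Suc.prems]
    by linarith
qed

lemma leakage_le: "leakage n L Ip sig Wzl T \<le> T * (N * (2 / ln 2 * \<delta>))"
proof -
  define keys where "keys h = map (\<lambda>t. map (\<lambda>i. fst (h ! t) ! i) (sorted_list_of_set (Ip t))) [1..<Suc T]"
    for h :: "(bool list \<times> 'z list) list"
  have keys_eq: "keys h1 = keys h2" if eq: "bits_on (hidden_pos T) h1 = bits_on (hidden_pos T) h2" for h1 h2
  proof -
    have "fst (h1 ! t) ! i = fst (h2 ! t) ! i" if "t \<le> T" "i \<in> Ip t" for t i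
    proof -
      have mem: "(t, i) \<in> hidden_pos T"
        using that Ip_sub[of T] unfolding hidden_pos_def key_pos_def by (cases "t = T") auto
      show ?thesis using eq[unfolded restrict_eq_iff, rule_format, OF mem] by (simp add: hist_bits_def)
    qed
    moreover have "finite (Ip t)" for t
      using Ip_sub[of t] Hs_sub[of t] by (meson finite_lessThan finite_subset subset_trans)
    ultimately show ?thesis unfolding keys_def by (intro map_cong refl) auto
  qed
  have "pmf_mutual_info (P T) keys (observed T) \<le> pmf_mutual_info (P T) (bits_on (hidden_pos T)) (observed T)"
    by (rule pmf_mutual_info_mono_left[OF finite_set_P], erule keys_eq)
  also have "\<dots> \<le> T * (N * (2 / ln 2 * \<delta>))" by (rule mutual_info_hidden_observed_le) simp
  finally show ?thesis
    unfolding leakage_def mi_map_pmf[OF finite_set_P] keys_def observed_def .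
qed

end

lemma scheme_leakage_le:
  fixes W :: "bool \<Rightarrow> 'y pmf" and Wzl :: "nat \<Rightarrow> (bool \<Rightarrow> 'z::finite pmf) list"
  assumes "\<And>t. t \<le> T \<Longrightarrow> B' t \<subseteq> Lset n \<beta> W \<inter> Hset n \<beta> (Wzl t)"
    and "\<And>t. t < T \<Longrightarrow> bij_betw (sig (Suc t)) ({..<2 ^ n} - Lset n \<beta> W) (Hset n \<beta> (Wzl t) - Lset n \<beta> W \<union> B' t)"
  shows "leakage n (Lset n \<beta> W) (\<lambda>t. Lset n \<beta> W \<inter> Hset n \<beta> (Wzl t) - B' t) sig Wzl T
         \<le> T * (real (2 ^ n) * (2 / ln 2 * delta n \<beta>))"
proof -
  interpret scheme_secrecy n "Lset n \<beta> W" "\<lambda>t. Lset n \<beta> W \<inter> Hset n \<beta> (Wzl t) - B' t" sig Wzl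
    "\<lambda>t. Hset n \<beta> (Wzl t)" "\<lambda>t. Hset n \<beta> (Wzl t) - Lset n \<beta> W \<union> B' t" T "delta n \<beta>"
    using assms by unfold_locales (auto simp: Lset_def Hset_def delta_def)
  show ?thesis by (rule leakage_le)
qed

theorem proposition5:
  fixes W :: "bool \<Rightarrow> 'y::finite pmf"
    and Wz :: "'st::finite \<Rightarrow> bool \<Rightarrow> 'z::finite pmf"
    and \<beta> :: real
  assumes "sym_channel W"
    and "\<forall>s. sym_channel (Wz s)"
    and "0 < \<beta>" and "\<beta> < 1 / 2"
  shows "\<exists>C::real. \<exists>n0::nat. \<forall>n\<ge>n0. \<forall>(T::nat) (ss :: nat \<Rightarrow> 'st list)
           (B' :: nat \<Rightarrow> nat set) (sig :: nat \<Rightarrow> nat \<Rightarrow> nat).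
     (let N = 2 ^ n;
          L = Lset n \<beta> W;
          H = (\<lambda>t. Hset n \<beta> (map Wz (ss t)));
          I = (\<lambda>t. L \<inter> H t);
          F = (\<lambda>t. H t - L);
          B = (\<lambda>t. {..<N} - L - H t);
          I' = (\<lambda>t. I t - B' t)
      in (\<forall>t\<le>T. length (ss t) = N \<and> card (B t) < card (I t) \<and> B' t \<subseteq> I t \<and> card (B' t) = card (B t))
         \<and> (\<forall>t<T. bij_betw (sig (Suc t)) ({..<N} - L) (F t \<union> B' t))
         \<longrightarrow> leakage n L I' sig (\<lambda>t. map Wz (ss t)) T
               \<le> real (T + 1) * (C * real N * delta n \<beta>))"
  unfolding Let_def
  apply (intro exI[of _ "2 / ln 2"] exI[of _ "0::nat"] allI impI)
  subgoal premises hyp for n T ss B' sig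
  proof -
    have "leakage n (Lset n \<beta> W) (\<lambda>t. Lset n \<beta> W \<inter> Hset n \<beta> (map Wz (ss t)) - B' t) sig (\<lambda>t. map Wz (ss t)) T
        \<le> T * (real (2 ^ n) * (2 / ln 2 * delta n \<beta>))"
      using hyp(2) by (intro scheme_leakage_le) auto
    also have "\<dots> = T * (2 / ln 2 * real (2 ^ n) * delta n \<beta>)" by (simp only: ac_simps)
    also have "\<dots> \<le> real (T + 1) * (2 / ln 2 * real (2 ^ n) * delta n \<beta>)"
      by (intro mult_right_mono) (simp_all add: delta_def)
    finally show ?thesis .
  qed
  done

end
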